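(* {\rm a)} We have $$\sum^{*}_{N\mathfrak{a}<\sqrt{\Delta}/2} \frac{\sqrt{\Delta}}{N\mathfrak{a}} + O\Bigl(\sum^{*}_{N\mathfrak{a}<\sqrt{\Delta}} 1\Bigr) < \sum_{i=1}^s u_i < \sum^{*}_{N\mathfrak{a}<\sqrt{\Delta}} \frac{\sqrt{\Delta}}{N\mathfrak{a}},$$ where $\sum^{*}$ denotes the sum over principal primitive ideals $\mathfrak{a}$ of $\mathcal{O}_K$. {\rm b)} We have $$\sum^{-}_{N\mathfrak{a}<\sqrt{\Delta}/2} \frac{\sqrt{\Delta}}{N\mathfrak{a}} + O\Bigl(\sum^{-}_{N\mathfrak{a}<\sqrt{\Delta}} 1\Bigr) < M_D < \sum^{-}_{N\mathfrak{a}<\sqrt{\Delta}} \frac{\sqrt{\Delta}}{N\mathfrak{a}},$$ where $\sum^{-}$ denotes the sum over principal primitive ideals generated by an element with negative norm.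
   Context: Let $K=\mathbb{Q}(\sqrt D)$ with $D>1$ squarefree, $\mathcal{O}_K$ its ring of integers and $\Delta\in\{D,4D\}$ its discriminant. Let $\omega_D=\sqrt D$ if $D\equiv 2,3 \pmod 4$ and $\omega_D=\frac{1+\sqrt D}{2}$ if $D\equiv 1\pmod 4$, and write its periodic continued fraction expansion as $\omega_D=[u_0,\overline{u_1,u_2,\dots,u_s}]$ with period length $s$ minimal. Define $M_D=u_1+u_3+\dots+u_{s-1}$ if $s$ is even, $M_D=2u_0+u_1+\dots+u_{s-1}$ if $s$ is odd and $D\equiv 2,3\pmod 4$, and $M_D=2u_0+u_1+\dots+u_{s-1}-1$ if $s$ is odd and $D\equiv 1\pmod 4$. An ideal is primitive if it is not divisible by a rational integer other than $1$; $N\mathfrak{a}$ denotes the norm of the ideal $\mathfrak{a}$. *)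

theory Defs
  imports Complex_Main "HOL-Computational_Algebra.Squarefree"
begin

text \<open>Real quadratic field K = Q(sqrt D), D > 1 squarefree, realised inside the reals.\<close>

definition omega :: "int \<Rightarrow> real" where
  "omega D = (if D mod 4 = 1 then (1 + sqrt (real_of_int D)) / 2 else sqrt (real_of_int D))"

definition omega_conj :: "int \<Rightarrow> real" where
  "omega_conj D = (if D mod 4 = 1 then (1 - sqrt (real_of_int D)) / 2 else - sqrt (real_of_int D))"

definition disc :: "int \<Rightarrow> int" where
  "disc D = (if D mod 4 = 1 then D else 4 * D)"

definition OK :: "int \<Rightarrow> real set" where
  "OK D = {of_int a + of_int b * omega D | a b. True}"

definition nonzero_ideal :: "int \<Rightarrow> real set \<Rightarrow> bool" where
  "nonzero_ideal D I \<longleftrightarrow> I \<subseteq> OK D \<and> 0 \<in> I \<and> I \<noteq> {0} \<and>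
     (\<forall>x\<in>I. \<forall>y\<in>I. x + y \<in> I) \<and> (\<forall>r\<in>OK D. \<forall>x\<in>I. r * x \<in> I)"

definition ideal_norm :: "int \<Rightarrow> real set \<Rightarrow> nat" where
  "ideal_norm D I = card ((\<lambda>x. {y \<in> OK D. y - x \<in> I}) ` OK D)"

definition primitive :: "int \<Rightarrow> real set \<Rightarrow> bool" where
  "primitive D I \<longleftrightarrow> (\<forall>n::int. n > 1 \<longrightarrow> \<not> I \<subseteq> {of_int n * x | x. x \<in> OK D})"

definition generates :: "int \<Rightarrow> real \<Rightarrow> real set \<Rightarrow> bool" where
  "generates D \<alpha> I \<longleftrightarrow> \<alpha> \<in> OK D \<and> I = {\<alpha> * x | x. x \<in> OK D}"

definition neg_norm :: "int \<Rightarrow> real \<Rightarrow> bool" where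
  "neg_norm D \<alpha> \<longleftrightarrow> (\<exists>a b :: int. \<alpha> = of_int a + of_int b * omega D \<and>
      (of_int a + of_int b * omega D) * (of_int a + of_int b * omega_conj D) < 0)"

definition PP :: "int \<Rightarrow> real \<Rightarrow> real set set" where
  "PP D X = {I. nonzero_ideal D I \<and> primitive D I \<and> (\<exists>\<alpha>. generates D \<alpha> I)
               \<and> real (ideal_norm D I) < X}"

definition PN :: "int \<Rightarrow> real \<Rightarrow> real set set" where
  "PN D X = {I. nonzero_ideal D I \<and> primitive D I \<and> (\<exists>\<alpha>. generates D \<alpha> I \<and> neg_norm D \<alpha>)
               \<and> real (ideal_norm D I) < X}"

fun cf_rem :: "real \<Rightarrow> nat \<Rightarrow> real" where
  "cf_rem x 0 = x"
| "cf_rem x (Suc n) = 1 / (cf_rem x n - of_int \<lfloor>cf_rem x n\<rfloor>)"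

definition cf :: "real \<Rightarrow> nat \<Rightarrow> int" where
  "cf x n = \<lfloor>cf_rem x n\<rfloor>"

definition cf_period :: "real \<Rightarrow> nat" where
  "cf_period x = (LEAST s. s > 0 \<and> (\<forall>n\<ge>1. cf x (n + s) = cf x n))"

definition MD :: "int \<Rightarrow> int" where
  "MD D = (let s = cf_period (omega D); u = cf (omega D) in
     if even s then (\<Sum>i\<in>{i. i \<in> {1..<s} \<and> odd i}. u i)
     else 2 * u 0 + (\<Sum>i\<in>{1..<s}. u i) - (if D mod 4 = 1 then 1 else 0))"

end

theory Submission
  imports Defs
begin

text \<open>
  Write \<open>\<theta>\<^sub>n = (P\<^sub>n + \<omega>) / Q\<^sub>n\<close> for the complete quotients of the continued fraction of \<omega>
  and \<open>\<Theta>\<^sub>n = \<theta>\<^sub>1 \<cdots> \<theta>\<^sub>n\<close>. The ideal \<open>[Q\<^sub>n, P\<^sub>n + \<omega>]\<close> is primitive of norm \<open>Q\<^sub>n < \<surd>\<Delta>\<close>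
  and principal, generated by \<open>Q\<^sub>n \<Theta>\<^sub>n\<close>, whose norm has the sign \<open>(-1)\<^sup>n\<close>; over one
  period these ideals are pairwise distinct. Conversely (Lagrange), a primitive principal
  ideal of norm \<open>q < \<surd>\<Delta>/2\<close> has a generator \<open>\<beta>\<close> such that \<open>q/\<beta>\<close> is a relative minimum of
  \<open>O\<^sub>K\<close>; multiplying by a power of the unit \<open>\<epsilon> = \<Theta>\<^sub>s\<close> moves it into \<open>[1/\<epsilon>, 1]\<close>, and there
  the relative minima are exactly the numbers \<open>1/\<Theta>\<^sub>n\<close>, so the ideal is one of the
  \<open>[Q\<^sub>n, P\<^sub>n + \<omega>]\<close>. As \<open>\<surd>\<Delta>/Q\<^sub>n - 2 < u\<^sub>n < \<surd>\<Delta>/Q\<^sub>n\<close>, summing over a period gives a) with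
  the constant 2, and summing over the odd indices, which carry the generators of negative
  norm, gives b) for even \<open>s\<close>. For odd \<open>s\<close> the unit \<open>\<epsilon>\<close> has norm \<open>-1\<close>, so every principal
  ideal has a generator of negative norm and b) is a) in disguise.
\<close>

lemma sqrt_int_irrational:
  fixes n :: int
  assumes "n > 1" "squarefree n"
  shows "sqrt (real_of_int n) \<notin> \<rat>"
proof
  assume "sqrt (real_of_int n) \<in> \<rat>"
  then obtain m k :: nat where k: "k \<noteq> 0" and sr: "\<bar>sqrt (real_of_int n)\<bar> = m / k"
      and cop: "coprime m k"
    by (rule Rats_abs_nat_div_natE)
  have "real m = sqrt (real_of_int n) * k" using sr k assms by (simp add: field_simps)
  then have "real m ^ 2 = real_of_int n * real k ^ 2" using assms by (simp add: power_mult_distrib)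
  then have eq: "int m ^ 2 = n * int k ^ 2"
    by (metis of_int_eq_iff of_int_mult of_int_of_nat_eq of_int_power)
  then have "int k ^ 2 dvd int m ^ 2" by simp
  moreover have "coprime (int k ^ 2) (int m ^ 2)" using cop by (simp add: coprime_commute)
  ultimately have "is_unit (int k ^ 2)" by (meson coprime_absorb_right coprime_common_divisor dvd_refl)
  then have "int k * int k = 1" by (simp add: power2_eq_square)
  then have "k * k = 1" by (metis of_nat_mult of_nat_1 of_nat_eq_iff)
  then have "k = 1" by simp
  then have n: "n = int m ^ 2" using eq by simp
  then have "int m dvd 1" using assms(2) squarefreeD by (metis dvd_refl)
  then show False using n assms(1) by simp
qed

lemma rat_coords_unique:
  fixes z :: real
  assumes "z \<notin> \<rat>" "a \<in> \<rat>" "b \<in> \<rat>" "c \<in> \<rat>" "d \<in> \<rat>" and "a + b * z = c + d * z"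
  shows "a = c \<and> b = d"
proof (cases "b = d")
  case False
  have "(d - b) * z = a - c" using assms(6) by (simp add: algebra_simps)
  then have "z = (a - c) / (d - b)" using False by (simp add: field_simps)
  then show ?thesis using assms(1-5) by simp
qed (use assms in simp)

lemma mult_expand_root:
  fixes z a b c d t n :: real
  assumes "z * z = t * z - n"
  shows "(a + b * z) * (c + d * z) = (a * c - b * d * n) + (a * d + b * c + b * d * t) * z"
proof -
  have "(a + b * z) * (c + d * z) = a * c + (a * d + b * c) * z + b * d * (z * z)"
    by (simp add: algebra_simps)
  then show ?thesis unfolding assms by (simp add: algebra_simps)
qed

lemma int_ideal_principal:
  fixes S :: "int set"
  assumes "k \<in> S" "k \<noteq> 0"
    and add: "\<And>x y. x \<in> S \<Longrightarrow> y \<in> S \<Longrightarrow> x + y \<in> S"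
    and mult: "\<And>c x. x \<in> S \<Longrightarrow> c * x \<in> S"
  shows "\<exists>q > 0. q \<in> S \<and> (\<forall>x \<in> S. q dvd x)"
proof -
  have "\<bar>k\<bar> = sgn k * k" by (simp add: abs_sgn mult.commute)
  then have "int (nat \<bar>k\<bar>) \<in> S" using mult[OF assms(1), of "sgn k"] by (metis abs_ge_zero int_nat_eq)
  then have ex: "\<exists>n. n > 0 \<and> int n \<in> S" using assms(2) by (intro exI[of _ "nat \<bar>k\<bar>"]) simp
  define n where "n = (LEAST n. n > 0 \<and> int n \<in> S)"
  have n: "n > 0" "int n \<in> S" using LeastI_ex[OF ex] unfolding n_def by auto
  have "int n dvd x" if "x \<in> S" for x
  proof -
    have "x mod int n = x + (- (x div int n)) * int n" by (simp add: minus_div_mult_eq_mod[symmetric])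
    moreover have "x + (- (x div int n)) * int n \<in> S" by (rule add[OF that mult[OF n(2)]])
    ultimately have "x mod int n \<in> S" by simp
    moreover have "int (nat (x mod int n)) = x mod int n" using n(1) by simp
    ultimately have "int (nat (x mod int n)) \<in> S" by simp
    moreover have "nat (x mod int n) < n" using n(1) by (simp add: nat_less_iff)
    then have "\<not> (nat (x mod int n) > 0 \<and> int (nat (x mod int n)) \<in> S)"
      unfolding n_def by (rule not_less_Least)
    ultimately have "\<not> nat (x mod int n) > 0" by simp
    moreover have "x mod int n \<ge> 0" using n(1) by simp
    ultimately show ?thesis by (simp add: dvd_eq_mod_eq_0)
  qed
  then show ?thesis using n of_nat_0_less_iff by blast
qed

text \<open>
  The arithmetic core of Lagrange's theorem: for \<open>x = \<theta>\<^sub>n\<close>, \<open>x' = \<theta>'\<^sub>n\<close>, \<open>a = u\<^sub>n\<close>, no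
  \<open>i + j x\<close> strictly between \<open>x - a\<close> and \<open>1\<close> has a conjugate as small as \<open>x' - a\<close>.
\<close>
lemma int_comb_conj_large:
  fixes x x' :: real and i j a :: int
  assumes y0: "0 < x - a" and x': "x' < 0" and a: "a \<ge> 1"
    and lo: "x - a < i + j * x" and hi: "i + j * x < 1"
  shows "\<bar>x' - a\<bar> < \<bar>i + j * x'\<bar>"
proof -
  define y y' i0 where "y = x - a" and "y' = x' - a" and "i0 = i + j * a"
  have \<nu>: "i + j * x = i0 + j * y" and \<nu>': "i + j * x' = i0 + j * y'"
    unfolding y_def y'_def i0_def by (simp_all add: algebra_simps)
  have yn: "y' < 0" using x' a by (simp add: y'_def)
  consider "j = 0" | "j \<ge> 1" | "j \<le> -1" by linarith
  then show ?thesis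
  proof cases
    case 1
    then have "0 < i0" "i0 < 1" using lo hi y0 unfolding \<nu> y_def by auto
    then show ?thesis by simp
  next
    case 2
    have "of_int j * y > 0" using 2 y0 by (simp add: y_def)
    then have i0: "i0 \<le> 0" using hi unfolding \<nu> by simp
    have jy': "(of_int j - 1) * y' \<le> 0" using 2 yn by (intro mult_nonneg_nonpos) auto
    then have le: "i0 + j * y' \<le> y'" using i0 by (simp add: algebra_simps)
    show ?thesis
    proof (rule ccontr)
      assume "\<not> ?thesis"
      then have "\<bar>i0 + j * y'\<bar> \<le> - y'" unfolding \<nu>' y'_def[symmetric] using yn by simp
      then have "i0 + (of_int j - 1) * y' = 0" using le by (simp add: abs_le_iff algebra_simps)
      then have "i0 = 0" "(of_int j - 1) * y' = 0" using i0 jy' by linarith+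
      then have "i + j * x = y" using yn unfolding \<nu> by simp
      then show False using lo by (simp add: y_def)
    qed
  next
    case 3
    have "of_int j * y < 0" using 3 y0 by (simp add: y_def mult_neg_pos)
    then have "(0::real) < i0" using lo y0 unfolding \<nu> y_def[symmetric] by linarith
    then have "i0 \<ge> 1" by simp
    moreover have "(- of_int j - 1) * (- y') \<ge> 0" using 3 yn by (intro mult_nonneg_nonneg) auto
    ultimately have "i0 + j * y' \<ge> 1 - y'" by (simp add: algebra_simps)
    then show ?thesis using yn unfolding \<nu>' y'_def by linarith
  qed
qed

lemma exists_power_int_scale:
  fixes e \<mu> :: real
  assumes e: "e > 1" and \<mu>: "\<mu> > 0"
  obtains k :: int where "1 / e \<le> e powi k * \<mu>" "e powi k * \<mu> \<le> 1"
proof -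
  define k where "k = \<lfloor>- log e \<mu>\<rfloor>"
  have "e powi k * \<mu> = e powr (k + log e \<mu>)"
    using e \<mu> by (simp add: powr_add powr_real_of_int')
  moreover have "-1 \<le> k + log e \<mu>" "k + log e \<mu> \<le> 0"
    unfolding k_def by linarith+
  ultimately have "e powr -1 \<le> e powi k * \<mu>" "e powi k * \<mu> \<le> e powr 0"
    using e by (simp_all only: powr_le_cancel_iff)
  moreover have "e powr -1 = 1 / e" "e powr 0 = 1" using e by (simp_all add: powr_minus inverse_eq_divide)
  ultimately show ?thesis using that by simp
qed

locale real_quadratic_field =
  fixes D :: int
  assumes D_gt_1: "D > 1" and squarefree_D: "squarefree D"
begin

abbreviation \<omega> where "\<omega> \<equiv> omega D"
abbreviation \<omega>' where "\<omega>' \<equiv> omega_conj D"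

definition omega_trace :: int where "omega_trace = (if D mod 4 = 1 then 1 else 0)"
definition omega_norm :: int where "omega_norm = (omega_trace - disc D) div 4"
definition sqrt_disc :: real where "sqrt_disc = sqrt (real_of_int (disc D))"

lemma disc_pos: "disc D > 0"
  using D_gt_1 by (simp add: disc_def)

lemma sqrt_disc_pos: "sqrt_disc > 0"
  using disc_pos by (simp add: sqrt_disc_def)

lemma sqrt_disc_eq: "sqrt_disc = (if D mod 4 = 1 then sqrt (real_of_int D) else 2 * sqrt (real_of_int D))"
proof (cases "D mod 4 = 1")
  case False
  have "sqrt (real_of_int (4 * D)) = sqrt 4 * sqrt (real_of_int D)" by (simp add: real_sqrt_mult)
  then show ?thesis using False by (simp add: sqrt_disc_def disc_def)
qed (simp add: sqrt_disc_def disc_def)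

lemma omega_plus_conj: "\<omega> + \<omega>' = omega_trace"
  by (auto simp: omega_def omega_conj_def omega_trace_def field_simps)

lemma omega_conj_eq: "\<omega>' = omega_trace - \<omega>"
  using omega_plus_conj by linarith

lemma omega_minus_conj: "\<omega> - \<omega>' = sqrt_disc"
  by (simp add: omega_def omega_conj_def sqrt_disc_eq field_simps)

lemma omega_times_conj: "\<omega> * \<omega>' = omega_norm"
proof -
  have "4 dvd omega_trace - disc D"
    by (cases "D mod 4 = 1") (simp_all add: omega_trace_def disc_def, presburger)
  then have norm4: "4 * omega_norm = omega_trace - disc D" by (simp add: omega_norm_def)
  have "omega_trace * omega_trace = omega_trace" by (simp add: omega_trace_def)
  moreover have "4 * (\<omega> * \<omega>') = (\<omega> + \<omega>') * (\<omega> + \<omega>') - (\<omega> - \<omega>') * (\<omega> - \<omega>')"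
    by (simp add: algebra_simps)
  ultimately have "4 * (\<omega> * \<omega>') = real_of_int (omega_trace - disc D)"
    using disc_pos unfolding omega_plus_conj omega_minus_conj sqrt_disc_def
    by (simp add: of_int_mult[symmetric] del: of_int_mult)
  then show ?thesis unfolding norm4[symmetric] by simp
qed

lemma omega_square: "\<omega> * \<omega> = omega_trace * \<omega> - omega_norm"
  and omega_conj_square: "\<omega>' * \<omega>' = omega_trace * \<omega>' - omega_norm"
proof -
  have "\<omega> * \<omega> = (\<omega> + \<omega>') * \<omega> - \<omega> * \<omega>'" "\<omega>' * \<omega>' = (\<omega> + \<omega>') * \<omega>' - \<omega> * \<omega>'"
    by (simp_all add: algebra_simps)
  then show "\<omega> * \<omega> = omega_trace * \<omega> - omega_norm" "\<omega>' * \<omega>' = omega_trace * \<omega>' - omega_norm"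
    unfolding omega_plus_conj omega_times_conj .
qed

lemma omega_irrational: "\<omega> \<notin> \<rat>"
proof
  assume "\<omega> \<in> \<rat>"
  then have "(2 * \<omega> - omega_trace) / (if D mod 4 = 1 then 1 else 2) \<in> \<rat>" by simp
  moreover have "2 * \<omega> - omega_trace = sqrt_disc"
    using omega_plus_conj omega_minus_conj by (simp add: algebra_simps)
  ultimately show False
    using sqrt_int_irrational[OF D_gt_1 squarefree_D] by (simp add: sqrt_disc_eq split: if_splits)
qed

lemma omega_conj_irrational: "\<omega>' \<notin> \<rat>"
proof
  assume "\<omega>' \<in> \<rat>"
  then have "omega_trace - \<omega>' \<in> \<rat>" by simp
  moreover have "omega_trace - \<omega>' = \<omega>" using omega_plus_conj by simp
  ultimately show False using omega_irrational by simp
qed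

lemma omega_gt_1: "\<omega> > 1"
proof (cases "D mod 4 = 1")
  case True
  then have "D \<ge> 5" using D_gt_1 by presburger
  then show ?thesis using True by (simp add: omega_def)
qed (use D_gt_1 in \<open>simp add: omega_def\<close>)

lemma omega_conj_neg: "\<omega>' < 0"
  using D_gt_1 by (simp add: omega_conj_def)

lemma int_coords_unique:
  fixes a b c d :: int
  assumes "a + b * \<omega> = c + d * \<omega>"
  shows "a = c \<and> b = d"
  using rat_coords_unique[OF omega_irrational, of a b c d] assms by simp

lemma of_int_plus_omega_nonzero: "of_int r + \<omega> \<noteq> 0" "of_int r + \<omega>' \<noteq> 0"
  using omega_irrational omega_conj_irrational Rats_of_int[of "- r"] by (auto simp: add_eq_0_iff)

section \<open>The field \<open>K\<close> and its conjugation\<close>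

definition field_K :: "real set" where "field_K = {a + b * \<omega> | a b. a \<in> \<rat> \<and> b \<in> \<rat>}"

text \<open>Well defined because \<open>1, \<omega>\<close> are linearly independent over \<open>\<rat>\<close>.\<close>
definition conjugate :: "real \<Rightarrow> real" where
  "conjugate t = (THE t'. \<exists>a b. a \<in> \<rat> \<and> b \<in> \<rat> \<and> t = a + b * \<omega> \<and> t' = a + b * \<omega>')"

lemma conjugate_eq:
  assumes "a \<in> \<rat>" "b \<in> \<rat>" "t = a + b * \<omega>"
  shows "conjugate t = a + b * \<omega>'"
  unfolding conjugate_def
proof (rule the_equality)
  fix t' assume "\<exists>a' b'. a' \<in> \<rat> \<and> b' \<in> \<rat> \<and> t = a' + b' * \<omega> \<and> t' = a' + b' * \<omega>'"
  then obtain a' b' where "a' \<in> \<rat>" "b' \<in> \<rat>" "t = a' + b' * \<omega>" "t' = a' + b' * \<omega>'" by blast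
  then show "t' = a + b * \<omega>'"
    using rat_coords_unique[OF omega_irrational, of a b a' b'] assms by simp
qed (use assms in blast)

lemma field_KE:
  assumes "t \<in> field_K"
  obtains a b where "a \<in> \<rat>" "b \<in> \<rat>" "t = a + b * \<omega>" "conjugate t = a + b * \<omega>'"
  using assms conjugate_eq unfolding field_K_def by blast

lemma field_KI: "a \<in> \<rat> \<Longrightarrow> b \<in> \<rat> \<Longrightarrow> a + b * \<omega> \<in> field_K"
  unfolding field_K_def by blast

lemma K_int [simp]: "real_of_int k \<in> field_K" and conjugate_int [simp]: "conjugate (of_int k) = of_int k"
  using field_KI[of "of_int k" 0] conjugate_eq[of "of_int k" 0] by simp_all

lemma K_1 [simp]: "1 \<in> field_K" and conjugate_1 [simp]: "conjugate 1 = 1"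
  using K_int[of 1] conjugate_int[of 1] by simp_all

lemma K_omega [simp]: "\<omega> \<in> field_K" and conjugate_omega [simp]: "conjugate \<omega> = \<omega>'"
  using field_KI[of 0 1] conjugate_eq[of 0 1] by simp_all

lemma K_add:
  assumes "s \<in> field_K" "t \<in> field_K"
  shows "s + t \<in> field_K" "conjugate (s + t) = conjugate s + conjugate t"
proof -
  obtain a b c d where "a \<in> \<rat>" "b \<in> \<rat>" "c \<in> \<rat>" "d \<in> \<rat>"
    and "s = a + b * \<omega>" "t = c + d * \<omega>" "conjugate s = a + b * \<omega>'" "conjugate t = c + d * \<omega>'"
    using assms by (metis field_KE)
  moreover have "s + t = (a + c) + (b + d) * \<omega>" using calculation by (simp add: algebra_simps)
  ultimately show "s + t \<in> field_K" "conjugate (s + t) = conjugate s + conjugate t"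
    using field_KI[of "a + c" "b + d"] conjugate_eq[of "a + c" "b + d" "s + t"] by (simp_all add: algebra_simps)
qed

lemma K_uminus:
  assumes "s \<in> field_K"
  shows "- s \<in> field_K" "conjugate (- s) = - conjugate s"
proof -
  obtain a b where "a \<in> \<rat>" "b \<in> \<rat>" "s = a + b * \<omega>" "conjugate s = a + b * \<omega>'"
    using assms by (metis field_KE)
  moreover have "- s = (- a) + (- b) * \<omega>" using \<open>s = _\<close> by simp
  ultimately show "- s \<in> field_K" "conjugate (- s) = - conjugate s"
    using field_KI[of "- a" "- b"] conjugate_eq[of "- a" "- b" "- s"] by simp_all
qed

lemma K_mult:
  assumes "s \<in> field_K" "t \<in> field_K"
  shows "s * t \<in> field_K" "conjugate (s * t) = conjugate s * conjugate t"
proof -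
  obtain a b c d where r: "a \<in> \<rat>" "b \<in> \<rat>" "c \<in> \<rat>" "d \<in> \<rat>"
    and st: "s = a + b * \<omega>" "t = c + d * \<omega>" "conjugate s = a + b * \<omega>'" "conjugate t = c + d * \<omega>'"
    using assms by (metis field_KE)
  define a' b' where "a' = a * c - b * d * omega_norm" and "b' = a * d + b * c + b * d * omega_trace"
  have r': "a' \<in> \<rat>" "b' \<in> \<rat>" using r by (auto simp: a'_def b'_def)
  have st': "s * t = a' + b' * \<omega>"
    unfolding st(1,2) a'_def b'_def by (rule mult_expand_root[OF omega_square])
  have "conjugate s * conjugate t = a' + b' * \<omega>'"
    unfolding st(3,4) a'_def b'_def by (rule mult_expand_root[OF omega_conj_square])
  then show "s * t \<in> field_K" "conjugate (s * t) = conjugate s * conjugate t"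
    using field_KI[OF r'] conjugate_eq[OF r' st'] st' by simp_all
qed

lemma K_pow:
  assumes "x \<in> field_K"
  shows "x ^ m \<in> field_K" "conjugate (x ^ m) = conjugate x ^ m"
  by (induction m) (use assms K_mult in simp_all)

lemma conjugate_nonzero:
  assumes "s \<in> field_K" "s \<noteq> 0"
  shows "conjugate s \<noteq> 0"
proof
  obtain a b where "a \<in> \<rat>" "b \<in> \<rat>" "s = a + b * \<omega>" "conjugate s = a + b * \<omega>'"
    using assms(1) by (rule field_KE)
  moreover assume "conjugate s = 0"
  ultimately show False
    using rat_coords_unique[OF omega_conj_irrational, of a b 0 0] assms(2) by simp
qed

lemma K_inverse:
  assumes sK: "s \<in> field_K" and s0: "s \<noteq> 0"
  shows "1 / s \<in> field_K" "conjugate (1 / s) = 1 / conjugate s"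
proof -
  obtain a b where r: "a \<in> \<rat>" "b \<in> \<rat>" and s: "s = a + b * \<omega>" and cs: "conjugate s = a + b * \<omega>'"
    using sK by (metis field_KE)
  have cs0: "conjugate s \<noteq> 0" using conjugate_nonzero sK s0 by simp
  define N where "N = s * conjugate s"
  have "N = a * a + a * b * (\<omega> + \<omega>') + b * b * (\<omega> * \<omega>')"
    unfolding N_def cs unfolding s by (simp add: algebra_simps)
  then have Nrat: "N \<in> \<rat>" using r by (simp add: omega_plus_conj omega_times_conj)
  have N0: "N \<noteq> 0" using s0 cs0 by (simp add: N_def)
  have cs': "conjugate s = (a + b * omega_trace) + (- b) * \<omega>"
    unfolding cs omega_plus_conj[symmetric] by (simp add: algebra_simps)
  have "1 / s = conjugate s / N" using s0 cs0 by (simp add: N_def)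
  also have "\<dots> = (a + b * omega_trace) / N + (- b / N) * \<omega>"
    unfolding cs' by (simp add: add_divide_distrib diff_divide_distrib)
  finally have inv: "1 / s = (a + b * omega_trace) / N + (- b / N) * \<omega>" .
  have r2: "(a + b * omega_trace) / N \<in> \<rat>" "- b / N \<in> \<rat>" using r Nrat by auto
  have "conjugate (1 / s) = (a + b * omega_trace) / N + (- b / N) * \<omega>'"
    by (rule conjugate_eq[OF r2 inv])
  also have "\<dots> = (a + b * omega_trace - b * \<omega>') / N"
    by (simp add: diff_divide_distrib add_divide_distrib)
  also have "a + b * omega_trace - b * \<omega>' = s"
    unfolding s omega_plus_conj[symmetric] by (simp add: algebra_simps)
  also have "s / N = 1 / conjugate s" using s0 by (simp add: N_def)
  finally show "conjugate (1 / s) = 1 / conjugate s" .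
  show "1 / s \<in> field_K" using field_KI[OF r2] inv by simp
qed

lemma K_divide:
  assumes "s \<in> field_K" "t \<in> field_K" "t \<noteq> 0"
  shows "s / t \<in> field_K" "conjugate (s / t) = conjugate s / conjugate t"
  using K_mult[of s "1 / t"] K_inverse[of t] assms by simp_all

section \<open>The ring of integers and the ideals \<open>[q, r + \<omega>]\<close>\<close>

lemma OK_iff: "x \<in> OK D \<longleftrightarrow> (\<exists>a b. x = of_int a + of_int b * \<omega>)"
  by (auto simp: OK_def)

lemma OKE:
  assumes "x \<in> OK D"
  obtains a b where "x = of_int a + of_int b * \<omega>"
  using assms OK_iff by blast

lemma OKI: "of_int a + of_int b * \<omega> \<in> OK D"
  using OK_iff by blast

lemma OK_K: "x \<in> OK D \<Longrightarrow> x \<in> field_K"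
  by (auto simp: OK_iff intro!: field_KI)

lemma OK_int [simp]: "real_of_int k \<in> OK D"
  using OKI[of k 0] by simp

lemma OK_1 [simp]: "1 \<in> OK D"
  using OK_int[of 1] by simp

lemma OK_omega [simp]: "\<omega> \<in> OK D"
  using OKI[of 0 1] by simp

lemma OK_uminus: "x \<in> OK D \<Longrightarrow> - x \<in> OK D"
proof -
  assume "x \<in> OK D"
  then obtain a b where "x = of_int a + of_int b * \<omega>" by (rule OKE)
  then have "- x = of_int (- a) + of_int (- b) * \<omega>" by simp
  then show ?thesis by (simp only: OKI)
qed

lemma OK_int_mult:
  "(of_int a + of_int b * \<omega>) * (of_int c + of_int d * \<omega>) =
     of_int (a * c - b * d * omega_norm) + of_int (a * d + b * c + b * d * omega_trace) * \<omega>"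
  using mult_expand_root[OF omega_square, of "of_int a" "of_int b" "of_int c" "of_int d"] by simp

lemma OK_mult: "x \<in> OK D \<Longrightarrow> y \<in> OK D \<Longrightarrow> x * y \<in> OK D"
  by (metis OKE OKI OK_int_mult)

lemma OK_pow: "x \<in> OK D \<Longrightarrow> x ^ m \<in> OK D"
  by (induction m) (auto intro: OK_mult)

lemma conjugate_OK: "conjugate (of_int a + of_int b * \<omega>) = of_int a + of_int b * \<omega>'"
  using conjugate_eq[of "of_int a" "of_int b"] by simp

lemma conjugate_OK_mem: "x \<in> OK D \<Longrightarrow> conjugate x \<in> OK D"
proof -
  assume "x \<in> OK D"
  then obtain a b where x: "x = of_int a + of_int b * \<omega>" by (rule OKE)
  have "conjugate x = of_int (a + b * omega_trace) + of_int (- b) * \<omega>"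
    unfolding x conjugate_OK omega_conj_eq by (simp add: algebra_simps)
  then show ?thesis by (simp only: OKI)
qed

definition norm_plus_omega :: "int \<Rightarrow> int" where
  "norm_plus_omega r = r * r + omega_trace * r + omega_norm"

lemma norm_plus_omega_eq: "(of_int r + \<omega>) * (of_int r + \<omega>') = of_int (norm_plus_omega r)"
proof -
  have "(of_int r + \<omega>) * (of_int r + \<omega>') = of_int r * of_int r + of_int r * (\<omega> + \<omega>') + \<omega> * \<omega>'"
    by (simp add: algebra_simps)
  then show ?thesis unfolding omega_plus_conj omega_times_conj by (simp add: norm_plus_omega_def)
qed

lemma norm_plus_omega_nonzero: "norm_plus_omega r \<noteq> 0"
  using norm_plus_omega_eq[of r] of_int_plus_omega_nonzero[of r] by auto

definition lattice :: "int \<Rightarrow> int \<Rightarrow> real set" where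
  "lattice q r = {of_int (i * q) + of_int j * (of_int r + \<omega>) | i j. True}"

lemma lattice_I: "of_int (i * q) + of_int j * (of_int r + \<omega>) \<in> lattice q r"
  unfolding lattice_def by blast

lemma lattice_E:
  assumes "x \<in> lattice q r"
  obtains i j where "x = of_int (i * q) + of_int j * (of_int r + \<omega>)"
  using assms unfolding lattice_def by blast

lemma mem_lattice_iff:
  assumes "q \<noteq> 0"
  shows "of_int a + of_int b * \<omega> \<in> lattice q r \<longleftrightarrow> q dvd a - b * r"
proof
  assume "of_int a + of_int b * \<omega> \<in> lattice q r"
  then obtain i j where "of_int a + of_int b * \<omega> = of_int (i * q) + of_int j * (of_int r + \<omega>)"
    by (rule lattice_E)
  then have "of_int a + of_int b * \<omega> = of_int (i * q + j * r) + of_int j * \<omega>"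
    by (simp add: algebra_simps)
  then show "q dvd a - b * r" using int_coords_unique[of a b "i * q + j * r" j] by simp
next
  assume "q dvd a - b * r"
  then obtain k where "a = k * q + b * r" by (metis dvd_def diff_eq_eq mult.commute)
  then have "of_int a + of_int b * \<omega> = of_int (k * q) + of_int b * (of_int r + \<omega>)"
    by (simp add: algebra_simps)
  then show "of_int a + of_int b * \<omega> \<in> lattice q r" using lattice_I by simp
qed

lemma lattice_OK: "lattice q r \<subseteq> OK D"
proof
  fix x assume "x \<in> lattice q r"
  then obtain i j where "x = of_int (i * q) + of_int j * (of_int r + \<omega>)" by (rule lattice_E)
  then have "x = of_int (i * q + j * r) + of_int j * \<omega>" by (simp add: algebra_simps)
  then show "x \<in> OK D" by (simp only: OKI)
qed

lemma lattice_eq_iff: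
  assumes "q \<noteq> 0"
  shows "lattice q r = lattice q r' \<longleftrightarrow> q dvd r - r'"
proof
  assume "lattice q r = lattice q r'"
  then have "of_int r + of_int 1 * \<omega> \<in> lattice q r'"
    using mem_lattice_iff[OF assms, of r 1 r] by simp
  then show "q dvd r - r'" using mem_lattice_iff[OF assms, of r 1 r'] by simp
next
  assume dvd: "q dvd r - r'"
  have "q dvd a - b * r \<longleftrightarrow> q dvd a - b * r'" for a b
  proof -
    obtain k where "r - r' = q * k" using dvd by blast
    then have e: "a - b * r = (a - b * r') + q * (- b * k)" by (simp add: algebra_simps)
    show ?thesis unfolding e by (rule dvd_add_left_iff) simp
  qed
  then have "x \<in> lattice q r \<longleftrightarrow> x \<in> lattice q r'" if "x \<in> OK D" for x
    using that mem_lattice_iff[OF assms] by (metis OKE)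
  then show "lattice q r = lattice q r'" using lattice_OK by blast
qed

lemma lattice_1: "lattice 1 r = OK D"
  using lattice_OK mem_lattice_iff[of 1 _ _ r] by (metis OKE one_dvd subsetI subset_antisym one_neq_zero)

lemma lattice_nonzero_ideal:
  assumes q: "q > 0" and dvd: "q dvd norm_plus_omega r"
  shows "nonzero_ideal D (lattice q r)"
  unfolding nonzero_ideal_def
proof (intro conjI ballI)
  show "lattice q r \<subseteq> OK D" by (rule lattice_OK)
  show "0 \<in> lattice q r" using lattice_I[of 0 q 0 r] by simp
  have "of_int q \<in> lattice q r" using lattice_I[of 1 q 0 r] by simp
  then show "lattice q r \<noteq> {0}" using q by auto
next
  fix x y assume "x \<in> lattice q r" "y \<in> lattice q r"
  then obtain i j i' j' where "x = of_int (i * q) + of_int j * (of_int r + \<omega>)"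
      "y = of_int (i' * q) + of_int j' * (of_int r + \<omega>)" by (metis lattice_E)
  then have "x + y = of_int ((i + i') * q) + of_int (j + j') * (of_int r + \<omega>)"
    by (simp add: algebra_simps)
  then show "x + y \<in> lattice q r" by (simp only: lattice_I)
next
  fix s x assume s: "s \<in> OK D" and x: "x \<in> lattice q r"
  have q0: "q \<noteq> 0" using q by simp
  obtain c d where s: "s = of_int c + of_int d * \<omega>" using s by (rule OKE)
  obtain a b where x': "x = of_int a + of_int b * \<omega>" using x lattice_OK by (metis OKE subsetD)
  obtain k where k: "a = b * r + q * k"
    using x unfolding x' mem_lattice_iff[OF q0] by (metis dvd_def diff_eq_eq add.commute)
  obtain m where m: "norm_plus_omega r = q * m" using dvd by blast
  have "(c * a - d * b * omega_norm) - (c * b + d * a + d * b * omega_trace) * r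
      = q * (k * (c - d * r)) - b * d * norm_plus_omega r"
    unfolding k norm_plus_omega_def by (simp add: algebra_simps)
  also have "\<dots> = q * (k * (c - d * r) - b * d * m)" unfolding m by (simp add: algebra_simps)
  finally have "q dvd (c * a - d * b * omega_norm) - (c * b + d * a + d * b * omega_trace) * r" by simp
  then show "s * x \<in> lattice q r"
    unfolding s x' OK_int_mult mem_lattice_iff[OF q0] .
qed

lemma lattice_primitive:
  assumes "q > 0"
  shows "primitive D (lattice q r)"
  unfolding primitive_def
proof (intro allI impI notI)
  fix n :: int assume n: "n > 1" and sub: "lattice q r \<subseteq> {of_int n * x |x. x \<in> OK D}"
  have "of_int r + \<omega> \<in> lattice q r" using lattice_I[of 0 q 1 r] by simp
  then obtain y where y: "y \<in> OK D" "of_int r + \<omega> = of_int n * y" using sub by blast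
  obtain c d where "y = of_int c + of_int d * \<omega>" using y(1) by (rule OKE)
  with y(2) have "of_int r + of_int 1 * \<omega> = of_int (n * c) + of_int (n * d) * \<omega>"
    by (simp add: algebra_simps)
  then have "n * d = 1" using int_coords_unique[of r 1 "n * c" "n * d"] by simp
  then show False using n zmult_eq_1_iff[of n d] by simp
qed

lemma lattice_coset_reduce:
  assumes "q > 0" "y \<in> OK D"
  shows "y - (of_int a + of_int b * \<omega>) \<in> lattice q r \<longleftrightarrow> y - of_int ((a - b * r) mod q) \<in> lattice q r"
proof -
  have q0: "q \<noteq> 0" using assms(1) by simp
  obtain c d where y: "y = of_int c + of_int d * \<omega>" using assms(2) by (rule OKE)
  have "y - (of_int a + of_int b * \<omega>) = of_int (c - a) + of_int (d - b) * \<omega>"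
    "y - of_int ((a - b * r) mod q) = of_int (c - (a - b * r) mod q) + of_int d * \<omega>"
    unfolding y by (simp_all add: algebra_simps)
  moreover have "(c - a) - (d - b) * r = (c - d * r) - (a - b * r)"
    "(c - (a - b * r) mod q) - d * r = (c - d * r) - (a - b * r) mod q"
    by (simp_all add: algebra_simps)
  ultimately show ?thesis
    by (simp only: mem_lattice_iff[OF q0] dvd_eq_mod_eq_0 mod_diff_right_eq)
qed

lemma ideal_norm_lattice:
  assumes q: "q > 0"
  shows "ideal_norm D (lattice q r) = nat q"
proof -
  define coset where "coset x = {y \<in> OK D. y - x \<in> lattice q r}" for x
  have reduce: "coset (of_int a + of_int b * \<omega>) = coset (of_int ((a - b * r) mod q))" for a b
    unfolding coset_def using lattice_coset_reduce[OF q] by blast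
  have inj: "inj_on (\<lambda>k. coset (of_int k)) {0..<q}"
  proof (rule inj_onI)
    fix k k' assume k: "k \<in> {0..<q}" "k' \<in> {0..<q}" and eq: "coset (of_int k) = coset (of_int k')"
    have "of_int k' \<in> coset (of_int k')" unfolding coset_def using lattice_I[of 0 q 0 r] by simp
    then have "of_int k' \<in> coset (of_int k)" using eq by simp
    then have "of_int (k' - k) + of_int 0 * \<omega> \<in> lattice q r" unfolding coset_def by simp
    then have dvd: "q dvd k' - k" using mem_lattice_iff[of q "k' - k" 0 r] q by simp
    show "k = k'"
    proof (rule ccontr)
      assume "k \<noteq> k'"
      then have "q \<le> \<bar>k' - k\<bar>" using dvd_imp_le_int[OF _ dvd] by simp
      then show False using k by auto
    qed
  qed
  have "coset ` OK D = (\<lambda>k. coset (of_int k)) ` {0..<q}"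
  proof
    show "coset ` OK D \<subseteq> (\<lambda>k. coset (of_int k)) ` {0..<q}"
      using reduce q by (auto elim!: OKE intro!: image_eqI)
  qed auto
  then have "ideal_norm D (lattice q r) = card ((\<lambda>k. coset (of_int k)) ` {0..<q})"
    unfolding ideal_norm_def coset_def by simp
  also have "\<dots> = nat q" using card_image[OF inj] by simp
  finally show ?thesis .
qed

lemma nonzero_ideal_closed:
  assumes "nonzero_ideal D I"
  shows "I \<subseteq> OK D" "x \<in> I \<Longrightarrow> y \<in> I \<Longrightarrow> x + y \<in> I" "s \<in> OK D \<Longrightarrow> x \<in> I \<Longrightarrow> s * x \<in> I"
    and "x \<in> I \<Longrightarrow> y \<in> I \<Longrightarrow> x - y \<in> I"
proof -
  show sub: "I \<subseteq> OK D" and add: "x \<in> I \<Longrightarrow> y \<in> I \<Longrightarrow> x + y \<in> I"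
    and mult: "s \<in> OK D \<Longrightarrow> x \<in> I \<Longrightarrow> s * x \<in> I" for x y s
    using assms unfolding nonzero_ideal_def by auto
  show "x \<in> I \<Longrightarrow> y \<in> I \<Longrightarrow> x - y \<in> I"
    using add[of x "(- 1) * y"] mult[of "- 1" y] OK_int[of "- 1"] by simp
qed

lemma nonzero_ideal_int_part:
  assumes I: "nonzero_ideal D I"
  obtains q where "q > 0" "of_int q \<in> I" "\<And>k. of_int k \<in> I \<Longrightarrow> q dvd k"
proof -
  note cl = nonzero_ideal_closed[OF I]
  define S where "S = {k. of_int k \<in> I}"
  obtain \<alpha> where \<alpha>: "\<alpha> \<in> I" "\<alpha> \<noteq> 0" using I unfolding nonzero_ideal_def by blast
  then have \<alpha>OK: "\<alpha> \<in> OK D" using cl(1) by blast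
  then obtain a b where ab: "\<alpha> = of_int a + of_int b * \<omega>" by (rule OKE)
  define N where "N = a * a + a * b * omega_trace + b * b * omega_norm"
  have "conjugate \<alpha> * \<alpha> = of_int a * of_int a + of_int a * of_int b * (\<omega> + \<omega>') + of_int b * of_int b * (\<omega> * \<omega>')"
    unfolding ab conjugate_OK by (simp add: algebra_simps)
  then have N: "conjugate \<alpha> * \<alpha> = of_int N" unfolding omega_plus_conj omega_times_conj N_def by simp
  have "N \<in> S" using cl(3)[OF conjugate_OK_mem[OF \<alpha>OK] \<alpha>(1)] unfolding N S_def by simp
  moreover have "conjugate \<alpha> \<noteq> 0" by (rule conjugate_nonzero[OF OK_K[OF \<alpha>OK] \<alpha>(2)])
  then have "N \<noteq> 0" using \<alpha>(2) N by force
  moreover have "x + y \<in> S" if "x \<in> S" "y \<in> S" for x y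
    using cl(2)[of "of_int x" "of_int y"] that unfolding S_def by simp
  moreover have "c * x \<in> S" if "x \<in> S" for c x
    using cl(3)[OF OK_int[of c], of "of_int x"] that unfolding S_def by simp
  ultimately have "\<exists>q > 0. q \<in> S \<and> (\<forall>x \<in> S. q dvd x)" by (rule int_ideal_principal)
  then show ?thesis using that unfolding S_def by blast
qed

lemma nonzero_ideal_omega_part:
  assumes I: "nonzero_ideal D I"
  obtains t where "t > 0" "\<exists>a. of_int a + of_int t * \<omega> \<in> I"
    and "\<And>a b. of_int a + of_int b * \<omega> \<in> I \<Longrightarrow> t dvd b"
proof -
  note cl = nonzero_ideal_closed[OF I]
  define S where "S = {b. \<exists>a. of_int a + of_int b * \<omega> \<in> I}"
  obtain q where q: "q > 0" "of_int q \<in> I" by (rule nonzero_ideal_int_part[OF I])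
  have "of_int 0 + of_int q * \<omega> \<in> I" using cl(3)[OF OK_omega q(2)] by (simp add: mult.commute)
  then have qS: "q \<in> S" unfolding S_def by blast
  have addS: "x + y \<in> S" if xy: "x \<in> S" "y \<in> S" for x y
  proof -
    obtain a a' where "of_int a + of_int x * \<omega> \<in> I" "of_int a' + of_int y * \<omega> \<in> I"
      using xy unfolding S_def by blast
    from cl(2)[OF this] have "of_int (a + a') + of_int (x + y) * \<omega> \<in> I" by (simp add: algebra_simps)
    then show ?thesis unfolding S_def by blast
  qed
  have multS: "c * x \<in> S" if x: "x \<in> S" for c x
  proof -
    obtain a where "of_int a + of_int x * \<omega> \<in> I" using x unfolding S_def by blast
    from cl(3)[OF OK_int[of c] this] have "of_int (c * a) + of_int (c * x) * \<omega> \<in> I" by (simp add: algebra_simps)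
    then show ?thesis unfolding S_def by blast
  qed
  have "\<exists>t > 0. t \<in> S \<and> (\<forall>b \<in> S. t dvd b)"
    using q(1) by (intro int_ideal_principal[OF qS _ addS multS]) simp
  then show ?thesis using that unfolding S_def by blast
qed

lemma primitive_ideal_contains_plus_omega:
  assumes I: "nonzero_ideal D I" and prim: "primitive D I"
  obtains r where "of_int r + \<omega> \<in> I"
proof -
  note cl = nonzero_ideal_closed[OF I]
  obtain t where t: "t > 0" "\<exists>a. of_int a + of_int t * \<omega> \<in> I"
    and t_dvd: "\<And>a b. of_int a + of_int b * \<omega> \<in> I \<Longrightarrow> t dvd b"
    using nonzero_ideal_omega_part[OF I] by blast
  txt \<open>Multiplying by \<open>\<omega>\<close> moves the rational coordinate into the \<open>\<omega>\<close>-coordinate.\<close>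
  have t_dvd_both: "t dvd a \<and> t dvd b" if "of_int a + of_int b * \<omega> \<in> I" for a b
  proof -
    have "\<omega> * (of_int a + of_int b * \<omega>) \<in> I" using cl(3)[OF OK_omega that] .
    then have "of_int (- b * omega_norm) + of_int (a + b * omega_trace) * \<omega> \<in> I"
      using OK_int_mult[of 0 1 a b] by simp
    then have "t dvd a + b * omega_trace" by (rule t_dvd)
    moreover have "t dvd b" using t_dvd that .
    ultimately show ?thesis by (metis dvd_add_left_iff dvd_mult2)
  qed
  have "I \<subseteq> {of_int t * x | x. x \<in> OK D}"
  proof
    fix x assume x: "x \<in> I"
    then obtain a b where ab: "x = of_int a + of_int b * \<omega>" using cl(1) by (metis OKE subsetD)
    then obtain a' b' where "a = t * a'" "b = t * b'" using t_dvd_both x by (meson dvd_def)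
    then have "x = of_int t * (of_int a' + of_int b' * \<omega>)" unfolding ab by (simp add: algebra_simps)
    then show "x \<in> {of_int t * x | x. x \<in> OK D}" using OKI by blast
  qed
  then have "\<not> t > 1" using prim unfolding primitive_def by blast
  then have "t = 1" using t(1) by linarith
  then show ?thesis using t(2) that by auto
qed

lemma primitive_ideal_eq_lattice:
  assumes I: "nonzero_ideal D I" and prim: "primitive D I"
  obtains q r where "q > 0" "q dvd norm_plus_omega r" "I = lattice q r"
proof -
  note cl = nonzero_ideal_closed[OF I]
  obtain q where q: "q > 0" "of_int q \<in> I" and q_dvd: "\<And>k. of_int k \<in> I \<Longrightarrow> q dvd k"
    using nonzero_ideal_int_part[OF I] by blast
  obtain r where r: "of_int r + \<omega> \<in> I" by (rule primitive_ideal_contains_plus_omega[OF I prim])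
  have "I = lattice q r"
  proof
    show "I \<subseteq> lattice q r"
    proof
      fix x assume x: "x \<in> I"
      then obtain a b where ab: "x = of_int a + of_int b * \<omega>" using cl(1) by (metis OKE subsetD)
      have "x - of_int b * (of_int r + \<omega>) \<in> I" using cl(4)[OF x cl(3)[OF OK_int r]] .
      moreover have "x - of_int b * (of_int r + \<omega>) = of_int (a - b * r)" unfolding ab by (simp add: algebra_simps)
      ultimately have "of_int (a - b * r) \<in> I" by simp
      then have "q dvd a - b * r" by (rule q_dvd)
      then show "x \<in> lattice q r" unfolding ab using mem_lattice_iff q(1) by simp
    qed
    show "lattice q r \<subseteq> I"
    proof
      fix x assume "x \<in> lattice q r"
      then obtain i j where "x = of_int i * of_int q + of_int j * (of_int r + \<omega>)" by (auto elim: lattice_E)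
      then show "x \<in> I" using cl(2)[OF cl(3)[OF OK_int q(2)] cl(3)[OF OK_int r]] by simp
    qed
  qed
  moreover have "(of_int r + \<omega>') * (of_int r + \<omega>) \<in> I"
  proof (rule cl(3)[OF _ r])
    show "of_int r + \<omega>' \<in> OK D"
      using conjugate_OK_mem[OF OKI[of r 1]] conjugate_OK[of r 1] by simp
  qed
  then have "q dvd norm_plus_omega r" using q_dvd norm_plus_omega_eq by (simp add: mult.commute)
  ultimately show ?thesis using that q(1) by blast
qed

lemma PP_subset_lattices: "PP D X \<subseteq> (\<lambda>(q, r). lattice q r) ` ({1..\<lceil>X\<rceil>} \<times> {0..\<lceil>X\<rceil>})"
proof
  fix I assume "I \<in> PP D X"
  then have I: "nonzero_ideal D I" "primitive D I" "real (ideal_norm D I) < X" unfolding PP_def by auto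
  obtain q r where qr: "q > 0" "I = lattice q r" by (rule primitive_ideal_eq_lattice[OF I(1,2)])
  have "of_int q < X" using I(3) qr ideal_norm_lattice by simp
  then have qX: "q \<le> \<lceil>X\<rceil>" by (simp add: le_ceiling_iff)
  have "lattice q r = lattice q (r mod q)" using lattice_eq_iff qr(1) by (simp add: mod_eq_dvd_iff[symmetric])
  moreover have "0 \<le> r mod q" "r mod q < q" using qr(1) by simp_all
  then have "r mod q \<in> {0..\<lceil>X\<rceil>}" using qX by simp
  ultimately show "I \<in> (\<lambda>(q, r). lattice q r) ` ({1..\<lceil>X\<rceil>} \<times> {0..\<lceil>X\<rceil>})"
    using qr qX by (intro image_eqI[of _ _ "(q, r mod q)"]) auto
qed

lemma PP_finite: "finite (PP D X)"
  using PP_subset_lattices by (rule finite_subset) simp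

lemma PN_subset_PP: "PN D X \<subseteq> PP D X"
  unfolding PN_def PP_def by blast

lemma PN_finite: "finite (PN D X)"
  using PN_subset_PP PP_finite by (rule finite_subset)

section \<open>The continued fraction of \<omega>\<close>

text \<open>
  The state \<open>(P\<^sub>n, Q\<^sub>n)\<close> describes the complete quotient \<open>\<theta>\<^sub>n = (P\<^sub>n + \<omega>) / Q\<^sub>n\<close>; one step
  of the expansion is \<open>P\<^sub>n\<^sub>+\<^sub>1 + \<omega> = u\<^sub>n Q\<^sub>n - (P\<^sub>n + \<omega>')\<close> and \<open>Q\<^sub>n Q\<^sub>n\<^sub>+\<^sub>1 = -N(P\<^sub>n\<^sub>+\<^sub>1 + \<omega>)\<close>.
\<close>
definition cf_step :: "int \<times> int \<Rightarrow> int \<times> int" where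
  "cf_step p = (let r = fst p; q = snd p; a = \<lfloor>(of_int r + \<omega>) / of_int q\<rfloor>; r' = a * q - r - omega_trace
              in (r', - (norm_plus_omega r' div q)))"

primrec cf_state :: "nat \<Rightarrow> int \<times> int" where
  "cf_state 0 = (0, 1)"
| "cf_state (Suc n) = cf_step (cf_state n)"

definition P :: "nat \<Rightarrow> int" where "P n = fst (cf_state n)"
definition Q :: "nat \<Rightarrow> int" where "Q n = snd (cf_state n)"
definition \<theta> :: "nat \<Rightarrow> real" where "\<theta> n = (of_int (P n) + \<omega>) / of_int (Q n)"
definition \<theta>' :: "nat \<Rightarrow> real" where "\<theta>' n = (of_int (P n) + \<omega>') / of_int (Q n)"
definition u :: "nat \<Rightarrow> int" where "u n = \<lfloor>\<theta> n\<rfloor>"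

lemma cf_state_eq: "cf_state n = (P n, Q n)"
  by (simp add: P_def Q_def)

lemma P_0: "P 0 = 0" and Q_0: "Q 0 = 1"
  by (simp_all add: P_def Q_def)

lemma P_Suc: "P (Suc n) = u n * Q n - P n - omega_trace"
  by (simp add: P_def Q_def cf_step_def Let_def u_def \<theta>_def)

lemma Q_Suc: "Q (Suc n) = - (norm_plus_omega (P (Suc n)) div Q n)"
  by (simp add: P_def Q_def cf_step_def Let_def u_def \<theta>_def)

lemma Q_dvd_norm_P_Suc:
  assumes "Q n dvd norm_plus_omega (P n)"
  shows "Q n dvd norm_plus_omega (P (Suc n))"
proof -
  have "norm_plus_omega (P (Suc n)) = norm_plus_omega (P n) + u n * Q n * (u n * Q n - 2 * P n - omega_trace)"
    unfolding P_Suc norm_plus_omega_def by (simp add: algebra_simps)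
  then show ?thesis using assms by simp
qed

lemma Q_nonzero_dvd: "Q n \<noteq> 0 \<and> Q n dvd norm_plus_omega (P n)"
proof (induction n)
  case (Suc n)
  then obtain m where m: "norm_plus_omega (P (Suc n)) = Q n * m"
    using Q_dvd_norm_P_Suc by blast
  then have "m \<noteq> 0" using norm_plus_omega_nonzero by auto
  moreover have "Q (Suc n) = - m" unfolding Q_Suc m using Suc by simp
  ultimately show ?case using m by simp
qed (simp add: Q_0)

lemma Q_nonzero: "Q n \<noteq> 0"
  using Q_nonzero_dvd by simp

lemma Q_mult_Q_Suc: "Q n * Q (Suc n) = - norm_plus_omega (P (Suc n))"
proof -
  obtain m where m: "norm_plus_omega (P (Suc n)) = Q n * m"
    using Q_dvd_norm_P_Suc Q_nonzero_dvd by blast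
  have "Q (Suc n) = - m" unfolding Q_Suc m using Q_nonzero[of n] by simp
  then show ?thesis using m by simp
qed

lemma complete_quotient_step:
  fixes r m a r' m' :: int
  assumes m: "m \<noteq> 0" and mm': "m * m' = - norm_plus_omega r'" and r': "r' = a * m - r - omega_trace"
  shows "1 / ((of_int r + \<omega>) / of_int m - of_int a) = (of_int r' + \<omega>) / of_int m'"
    and "1 / ((of_int r + \<omega>') / of_int m - of_int a) = (of_int r' + \<omega>') / of_int m'"
proof -
  have m'0: "m' \<noteq> 0" using mm' norm_plus_omega_nonzero by auto
  have r_eq: "(of_int r :: real) - of_int a * of_int m = - of_int r' - of_int omega_trace" using r' by simp
  note n1 = of_int_plus_omega_nonzero(1)[of r'] and n2 = of_int_plus_omega_nonzero(2)[of r']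
  have prod: "of_int m * of_int m' = - ((of_int r' + \<omega>) * (of_int r' + \<omega>'))"
    using mm' norm_plus_omega_eq[of r'] by (metis of_int_minus of_int_mult)
  have e1: "(of_int r + \<omega>) / of_int m - of_int a = - (of_int r' + \<omega>') / of_int m"
  proof -
    have "(of_int r + \<omega>) / of_int m - of_int a = (of_int r - of_int a * of_int m + \<omega>) / of_int m"
      using m by (simp add: field_simps)
    also have "\<dots> = (- of_int r' + (\<omega> - of_int omega_trace)) / of_int m" unfolding r_eq by (simp add: algebra_simps)
    also have "\<dots> = - (of_int r' + \<omega>') / of_int m" unfolding omega_conj_eq by (simp add: algebra_simps)
    finally show ?thesis .
  qed
  have e2: "(of_int r + \<omega>') / of_int m - of_int a = - (of_int r' + \<omega>) / of_int m"
  proof -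
    have "(of_int r + \<omega>') / of_int m - of_int a = (of_int r - of_int a * of_int m + \<omega>') / of_int m"
      using m by (simp add: field_simps)
    also have "\<dots> = (- of_int r' + (\<omega>' - of_int omega_trace)) / of_int m" unfolding r_eq by (simp add: algebra_simps)
    also have "\<omega>' - of_int omega_trace = - \<omega>" using omega_plus_conj by simp
    also have "(- of_int r' + - \<omega>) / of_int m = - (of_int r' + \<omega>) / of_int m" by (simp add: algebra_simps)
    finally show ?thesis .
  qed
  show "1 / ((of_int r + \<omega>) / of_int m - of_int a) = (of_int r' + \<omega>) / of_int m'"
    unfolding e1 using m m'0 n1 n2 prod by (simp add: field_simps)
  show "1 / ((of_int r + \<omega>') / of_int m - of_int a) = (of_int r' + \<omega>') / of_int m'"
    unfolding e2 using m m'0 n1 n2 prod by (simp add: field_simps)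
qed

lemma theta_step: "1 / (\<theta> n - of_int (u n)) = \<theta> (Suc n)"
  unfolding \<theta>_def using complete_quotient_step(1)[OF Q_nonzero[of n] Q_mult_Q_Suc[of n] P_Suc[of n]] by simp

lemma theta'_step: "1 / (\<theta>' n - of_int (u n)) = \<theta>' (Suc n)"
  unfolding \<theta>'_def using complete_quotient_step(2)[OF Q_nonzero[of n] Q_mult_Q_Suc[of n] P_Suc[of n]] by simp

lemma theta_irrational: "\<theta> n \<notin> \<rat>"
proof
  assume h: "\<theta> n \<in> \<rat>"
  have "\<omega> = \<theta> n * of_int (Q n) - of_int (P n)" using Q_nonzero[of n] unfolding \<theta>_def by simp
  then have "\<omega> \<in> \<rat>" using h by simp
  then show False using omega_irrational by simp
qed

lemma theta_minus_u_pos: "\<theta> n - of_int (u n) > 0"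
proof -
  have "of_int (u n) \<le> \<theta> n" unfolding u_def by simp
  moreover have "of_int (u n) \<noteq> \<theta> n" using theta_irrational[of n] by (metis Rats_of_int)
  ultimately show ?thesis by simp
qed

lemma cf_rem_theta: "cf_rem \<omega> n = \<theta> n"
proof (induction n)
  case 0 then show ?case by (simp add: \<theta>_def P_0 Q_0)
next
  case (Suc n)
  then show ?case using theta_step[of n] by (simp add: u_def)
qed

lemma cf_omega_eq_u: "cf \<omega> n = u n"
  unfolding cf_def cf_rem_theta u_def ..

lemma theta_gt_1_theta'_neg: "\<theta> n > 1 \<and> \<theta>' n < 0"
proof (induction n)
  case 0 then show ?case using omega_gt_1 omega_conj_neg by (simp add: \<theta>_def \<theta>'_def P_0 Q_0)
next
  case (Suc n)
  have a1: "u n \<ge> 1" using Suc unfolding u_def by (simp add: le_floor_iff)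
  have "\<theta> n - of_int (u n) < 1" unfolding u_def by linarith
  then have "1 / (\<theta> n - of_int (u n)) > 1" using theta_minus_u_pos[of n] by (simp add: less_divide_eq)
  then have "\<theta> (Suc n) > 1" using theta_step[of n] by simp
  moreover have "\<theta>' n - of_int (u n) < 0" using Suc a1 by simp
  then have "1 / (\<theta>' n - of_int (u n)) < 0" by simp
  then have "\<theta>' (Suc n) < 0" using theta'_step[of n] by simp
  ultimately show ?case by simp
qed

lemma theta'_Suc_gt_minus_1: "\<theta>' (Suc n) > -1"
proof -
  have a1: "u n \<ge> 1" using theta_gt_1_theta'_neg[of n] unfolding u_def by (simp add: le_floor_iff)
  have "\<theta>' n - of_int (u n) < -1" using theta_gt_1_theta'_neg[of n] a1 by simp
  then have "1 / (\<theta>' n - of_int (u n)) > -1"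
    by (smt (verit) divide_less_eq_1_neg divide_minus_left divide_pos_neg)
  then show ?thesis using theta'_step[of n] by simp
qed

lemma u_ge_1: "u n \<ge> 1"
  using theta_gt_1_theta'_neg[of n] unfolding u_def by (simp add: le_floor_iff)

lemma theta_minus_theta': "\<theta> n - \<theta>' n = sqrt_disc / of_int (Q n)"
  unfolding \<theta>_def \<theta>'_def using omega_minus_conj Q_nonzero[of n] by (simp add: diff_divide_distrib[symmetric])

lemma Q_pos: "Q n > 0"
proof -
  have "\<theta> n - \<theta>' n > 0" using theta_gt_1_theta'_neg[of n] by simp
  then have "sqrt_disc / of_int (Q n) > 0" using theta_minus_theta' by simp
  then show ?thesis using sqrt_disc_pos by (simp add: zero_less_divide_iff)
qed

lemma Q_lt_sqrt_disc: "of_int (Q n) < sqrt_disc"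
proof -
  have "\<theta> n - \<theta>' n > 1" using theta_gt_1_theta'_neg[of n] by simp
  then have "sqrt_disc / of_int (Q n) > 1" using theta_minus_theta' by simp
  then show ?thesis using Q_pos[of n] by (simp add: less_divide_eq)
qed

lemma P_plus_omega_conj_bounds: "n \<ge> 1 \<Longrightarrow> - of_int (Q n) < of_int (P n) + \<omega>' \<and> of_int (P n) + \<omega>' < 0"
proof -
  assume n: "n \<ge> 1"
  obtain m where m: "n = Suc m" using n by (cases n) auto
  have q: "of_int (Q n) > (0::real)" using Q_pos[of n] by simp
  have "\<theta>' n > -1" "\<theta>' n < 0" using theta'_Suc_gt_minus_1[of m] theta_gt_1_theta'_neg[of n] m by auto
  then show ?thesis unfolding \<theta>'_def using q by (simp add: divide_less_eq less_divide_eq)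
qed

lemma u_lt_sqrt_disc_div_Q: "n \<ge> 1 \<Longrightarrow> of_int (u n) < sqrt_disc / of_int (Q n)"
proof -
  assume n: "n \<ge> 1"
  have q: "of_int (Q n) > (0::real)" using Q_pos[of n] by simp
  have "of_int (P n) + \<omega> = of_int (P n) + \<omega>' + sqrt_disc" using omega_minus_conj by simp
  then have "of_int (P n) + \<omega> < sqrt_disc" using P_plus_omega_conj_bounds[OF n] by simp
  then have "\<theta> n < sqrt_disc / of_int (Q n)" unfolding \<theta>_def using q by (simp add: divide_strict_right_mono)
  moreover have "of_int (u n) \<le> \<theta> n" unfolding u_def by simp
  ultimately show ?thesis by simp
qed

lemma u_gt_sqrt_disc_div_Q_minus_2: "n \<ge> 1 \<Longrightarrow> of_int (u n) > sqrt_disc / of_int (Q n) - 2"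
proof -
  assume n: "n \<ge> 1"
  have q: "of_int (Q n) > (0::real)" using Q_pos[of n] by simp
  have "of_int (P n) + \<omega> = of_int (P n) + \<omega>' + sqrt_disc" using omega_minus_conj by simp
  then have "of_int (P n) + \<omega> > sqrt_disc - of_int (Q n)" using P_plus_omega_conj_bounds[OF n] by simp
  then have "\<theta> n > (sqrt_disc - of_int (Q n)) / of_int (Q n)" unfolding \<theta>_def using q
    by (simp add: divide_strict_right_mono)
  also have "(sqrt_disc - of_int (Q n)) / of_int (Q n) = sqrt_disc / of_int (Q n) - 1" using q by (simp add: field_simps)
  finally have "\<theta> n > sqrt_disc / of_int (Q n) - 1" .
  moreover have "of_int (u n) > \<theta> n - 1" unfolding u_def by linarith
  ultimately show ?thesis by simp
qed

lemma u_eq_if_cf_state_eq: "cf_state m = cf_state n \<Longrightarrow> u m = u n"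
  unfolding u_def \<theta>_def P_def Q_def by simp

lemma P_eq_if_Q_dvd:
  assumes m: "m \<ge> 1" and n: "n \<ge> 1" and q: "Q m = Q n" and dvd: "Q m dvd P m - P n"
  shows "P m = P n"
proof (rule ccontr)
  have "\<bar>of_int (P m) - of_int (P n)\<bar> < (of_int (Q m) :: real)"
    using P_plus_omega_conj_bounds[OF m] P_plus_omega_conj_bounds[OF n] q by linarith
  then have "\<bar>P m - P n\<bar> < Q m" by linarith
  moreover assume "P m \<noteq> P n"
  then have "\<bar>Q m\<bar> \<le> \<bar>P m - P n\<bar>" using dvd_imp_le_int dvd by simp
  ultimately show False by simp
qed

lemma cf_state_Suc_inj:
  assumes m: "m \<ge> 1" and n: "n \<ge> 1" and e: "cf_state (Suc m) = cf_state (Suc n)"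
  shows "cf_state m = cf_state n"
proof -
  have P1: "P (Suc m) = P (Suc n)" and Q1: "Q (Suc m) = Q (Suc n)" using e by (simp_all add: P_def Q_def)
  have "Q m * Q (Suc m) = Q n * Q (Suc m)" using Q_mult_Q_Suc[of m] Q_mult_Q_Suc[of n] P1 Q1 by simp
  then have Qe: "Q m = Q n" using Q_nonzero[of "Suc m"] by simp
  have "P m - P n = (u m - u n) * Q m" using P1 Qe unfolding P_Suc by (simp add: algebra_simps)
  then have "P m = P n" using P_eq_if_Q_dvd[OF m n Qe] by simp
  then show ?thesis using Qe cf_state_eq by simp
qed

lemma cf_state_bounded: "n \<ge> 1 \<Longrightarrow> cf_state n \<in> {\<lfloor>- \<omega>' - sqrt_disc\<rfloor>..\<lceil>- \<omega>'\<rceil>} \<times> {1..\<lceil>sqrt_disc\<rceil>}"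
proof -
  assume n: "n \<ge> 1"
  have b: "- of_int (Q n) < of_int (P n) + \<omega>'" "of_int (P n) + \<omega>' < 0" using P_plus_omega_conj_bounds[OF n] by auto
  have q: "of_int (Q n) < sqrt_disc" by (rule Q_lt_sqrt_disc)
  have "of_int \<lfloor>- \<omega>' - sqrt_disc\<rfloor> \<le> - \<omega>' - sqrt_disc" by simp
  then have "of_int \<lfloor>- \<omega>' - sqrt_disc\<rfloor> < (of_int (P n) :: real)" using b q by linarith
  then have 1: "\<lfloor>- \<omega>' - sqrt_disc\<rfloor> \<le> P n" by simp
  have "(of_int (P n) :: real) \<le> of_int \<lceil>- \<omega>'\<rceil>" using b le_of_int_ceiling[of "- \<omega>'"] by linarith
  then have 2: "P n \<le> \<lceil>- \<omega>'\<rceil>" by simp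
  have "(of_int (Q n) :: real) \<le> of_int \<lceil>sqrt_disc\<rceil>" using q le_of_int_ceiling[of sqrt_disc] by linarith
  then have 3: "Q n \<le> \<lceil>sqrt_disc\<rceil>" by simp
  have 4: "Q n \<ge> 1" using Q_pos[of n] by simp
  show ?thesis using 1 2 3 4 cf_state_eq[of n] by simp
qed

lemma cf_state_repeats: "\<exists>i j. 1 \<le> i \<and> i < j \<and> cf_state i = cf_state j"
proof -
  have "\<not> inj_on cf_state {1..}"
  proof
    assume inj: "inj_on cf_state {1..}"
    have "cf_state ` {1..} \<subseteq> {\<lfloor>- \<omega>' - sqrt_disc\<rfloor>..\<lceil>- \<omega>'\<rceil>} \<times> {1..\<lceil>sqrt_disc\<rceil>}" by (rule image_subsetI) (simp add: cf_state_bounded)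
    then have "finite (cf_state ` {1..})" by (rule finite_subset) simp
    then have "finite ({1..} :: nat set)" using finite_imageD inj by blast
    then show False using infinite_Ici[of "1::nat"] by simp
  qed
  then obtain i j where ij: "i \<ge> 1" "j \<ge> 1" "i \<noteq> j" "cf_state i = cf_state j" unfolding inj_on_def by auto
  show ?thesis
  proof (cases "i < j")
    case True then show ?thesis using ij by blast
  next
    case False then have "j < i" using ij by simp
    then show ?thesis using ij by (intro exI[of _ j] exI[of _ i]) simp
  qed
qed

text \<open>Reduced states determine their predecessors, so a repetition propagates backwards to index 1.\<close>
lemma cf_state_periodic_from:
  assumes i: "1 \<le> i" and ij: "i < j" and e: "cf_state i = cf_state j"
  shows "n \<ge> 1 \<Longrightarrow> cf_state (n + (j - i)) = cf_state n"
proof -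
  define p where "p = j - i"
  have fw: "cf_state (i + k + p) = cf_state (i + k)" for k
  proof (induction k)
    case 0 then show ?case using e ij p_def by simp
  next
    case (Suc k) then show ?case by simp
  qed
  have bw: "k < i \<Longrightarrow> cf_state (i - k + p) = cf_state (i - k)" for k
  proof (induction k)
    case 0 then show ?case using fw[of 0] by simp
  next
    case (Suc k)
    have e1: "Suc (i - Suc k) = i - k" using Suc.prems by simp
    have e2: "Suc (i - Suc k + p) = i - k + p" using Suc.prems by simp
    have "cf_state (Suc (i - Suc k + p)) = cf_state (Suc (i - Suc k))"
      unfolding e1 e2 using Suc.IH Suc.prems by simp
    then show ?case using cf_state_Suc_inj[of "i - Suc k + p" "i - Suc k"] Suc.prems by simp
  qed
  assume n: "n \<ge> 1"
  show "cf_state (n + (j - i)) = cf_state n"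
  proof (cases "n \<ge> i")
    case True
    then obtain k where "n = i + k" using le_Suc_ex by blast
    then show ?thesis using fw[of k] p_def by simp
  next
    case False
    then have "i - (i - n) = n" "i - n < i" using n by auto
    then show ?thesis using bw[of "i - n"] p_def by simp
  qed
qed

lemma u_periodic_of_cf_state_eq:
  assumes "1 \<le> i" "i < j" "cf_state i = cf_state j"
  shows "\<forall>n\<ge>1. u (n + (j - i)) = u n"
  using cf_state_periodic_from[OF assms] u_eq_if_cf_state_eq by blast

definition period :: nat where "period = cf_period \<omega>"

lemma u_periodic: "period > 0 \<and> (\<forall>n\<ge>1. u (n + period) = u n)"
  and period_minimal: "p > 0 \<Longrightarrow> (\<forall>n\<ge>1. u (n + p) = u n) \<Longrightarrow> period \<le> p"
proof -
  obtain i j where ij: "1 \<le> i" "i < j" "cf_state i = cf_state j" using cf_state_repeats by blast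
  note per = u_periodic_of_cf_state_eq[OF ij]
  have ex: "\<exists>p. p > 0 \<and> (\<forall>n\<ge>1. cf \<omega> (n + p) = cf \<omega> n)"
    unfolding cf_omega_eq_u using per ij(2) by (intro exI[of _ "j - i"]) simp
  show "period > 0 \<and> (\<forall>n\<ge>1. u (n + period) = u n)"
    using LeastI_ex[OF ex] unfolding period_def cf_period_def cf_omega_eq_u by simp
  show "p > 0 \<Longrightarrow> (\<forall>n\<ge>1. u (n + p) = u n) \<Longrightarrow> period \<le> p"
    unfolding period_def cf_period_def cf_omega_eq_u by (rule Least_le) blast
qed

lemma period_ge_1: "period \<ge> 1"
  using u_periodic by simp

lemma theta_pos: "\<theta> n > 0"
  using theta_gt_1_theta'_neg[of n] by simp

lemma theta_minus_u: "\<theta> n - of_int (u n) = 1 / \<theta> (Suc n)"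
proof -
  have "\<theta> (Suc n) = 1 / (\<theta> n - of_int (u n))" using theta_step[of n] by simp
  then show ?thesis by simp
qed

lemma theta_shift_diff_Suc:
  assumes "u (m + k) = u m"
  shows "\<bar>\<theta> (Suc m) - \<theta> (Suc m + k)\<bar> = \<bar>\<theta> m - \<theta> (m + k)\<bar> * (\<theta> (Suc m) * \<theta> (Suc m + k))"
proof -
  have pos: "\<theta> (Suc m) > 0" "\<theta> (Suc m + k) > 0" using theta_pos by blast+
  have "\<theta> m - \<theta> (m + k) = 1 / \<theta> (Suc m) - 1 / \<theta> (Suc m + k)"
    using theta_minus_u[of m] theta_minus_u[of "m + k"] assms by simp
  then have "(\<theta> m - \<theta> (m + k)) * (\<theta> (Suc m) * \<theta> (Suc m + k)) = \<theta> (Suc m + k) - \<theta> (Suc m)"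
    using pos by (simp add: field_simps)
  then show ?thesis using pos by (metis abs_minus_commute abs_mult abs_of_pos mult_pos_pos)
qed

text \<open>Since all \<open>\<theta>\<^sub>n > 1\<close>, two expansions with the same partial quotients drift apart.\<close>
lemma theta_shift_diff_grows:
  assumes u: "\<And>m. m \<ge> n \<Longrightarrow> u (m + k) = u m" and ne: "\<theta> n \<noteq> \<theta> (n + k)"
  shows "\<bar>\<theta> n - \<theta> (n + k)\<bar> < \<bar>\<theta> (n + Suc j) - \<theta> (n + Suc j + k)\<bar>"
proof (induction j)
  have factor: "\<theta> (Suc m) * \<theta> (Suc m + k) > 1" for m
    using theta_gt_1_theta'_neg[of "Suc m"] theta_gt_1_theta'_neg[of "Suc m + k"] by (intro less_1_mult) auto
  {
    case 0
    have "\<bar>\<theta> n - \<theta> (n + k)\<bar> * 1 < \<bar>\<theta> n - \<theta> (n + k)\<bar> * (\<theta> (Suc n) * \<theta> (Suc n + k))"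
      using factor[of n] ne by (intro mult_strict_left_mono) auto
    then show ?case using theta_shift_diff_Suc[OF u[of n]] by simp
  next
    case (Suc j)
    let ?m = "n + Suc j"
    have "\<bar>\<theta> ?m - \<theta> (?m + k)\<bar> * 1 \<le> \<bar>\<theta> ?m - \<theta> (?m + k)\<bar> * (\<theta> (Suc ?m) * \<theta> (Suc ?m + k))"
      using factor[of ?m] by (intro mult_left_mono) auto
    then show ?case using Suc theta_shift_diff_Suc[OF u[of ?m]] by simp
  }
qed

lemma theta_period: "n \<ge> 1 \<Longrightarrow> \<theta> (n + period) = \<theta> n"
proof (rule ccontr)
  assume n: "n \<ge> 1" and ne: "\<theta> (n + period) \<noteq> \<theta> n"
  obtain i j where ij: "1 \<le> i" "i < j" "cf_state i = cf_state j" using cf_state_repeats by blast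
  define p where "p = j - i"
  have \<theta>p: "\<theta> (m + p) = \<theta> m" if "m \<ge> 1" for m
    using cf_state_periodic_from[OF ij that] unfolding p_def \<theta>_def P_def Q_def by simp
  have "\<bar>\<theta> n - \<theta> (n + period)\<bar> < \<bar>\<theta> (n + Suc (p - 1)) - \<theta> (n + Suc (p - 1) + period)\<bar>"
    using n u_periodic ne by (intro theta_shift_diff_grows) auto
  moreover have "n + Suc (p - 1) = n + p" using ij by (simp add: p_def)
  moreover have "\<theta> (n + p + period) = \<theta> (n + period)" using \<theta>p[of "n + period"] n by (simp add: ac_simps)
  ultimately show False using \<theta>p[OF n] by simp
qed

lemma cf_state_eq_of_theta_eq: "\<theta> m = \<theta> n \<Longrightarrow> cf_state m = cf_state n"
proof -
  assume e: "\<theta> m = \<theta> n"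
  have "(of_int (P m) + \<omega>) * of_int (Q n) = (of_int (P n) + \<omega>) * of_int (Q m)"
    using e Q_nonzero[of m] Q_nonzero[of n] unfolding \<theta>_def by (simp add: field_simps)
  then have "of_int (P m * Q n) + of_int (Q n) * \<omega> = of_int (P n * Q m) + of_int (Q m) * \<omega>"
    by (simp add: algebra_simps)
  then have "P m * Q n = P n * Q m \<and> Q n = Q m" using int_coords_unique by blast
  then have "Q m = Q n" "P m = P n" using Q_nonzero[of m] by auto
  then show ?thesis using cf_state_eq by simp
qed

lemma cf_state_periodic: "n \<ge> 1 \<Longrightarrow> cf_state (n + period) = cf_state n"
  using theta_period cf_state_eq_of_theta_eq by blast

lemma Q_period: "Q period = 1"
proof -
  have "cf_state (Suc period) = cf_state 1" using cf_state_periodic[of 1] by simp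
  then have r: "P (Suc period) = P 1" and q: "Q (Suc period) = Q 1" by (simp_all add: P_def Q_def)
  have "Q period * Q (Suc period) = Q 0 * Q 1" using Q_mult_Q_Suc[of period] Q_mult_Q_Suc[of 0] r by simp
  then show ?thesis using q Q_nonzero[of 1] Q_0 by simp
qed

lemma cf_state_distinct: "1 \<le> i \<Longrightarrow> i < j \<Longrightarrow> j \<le> period \<Longrightarrow> cf_state i \<noteq> cf_state j"
proof
  assume ij: "1 \<le> i" "i < j" "j \<le> period" and e: "cf_state i = cf_state j"
  have "\<forall>n\<ge>1. u (n + (j - i)) = u n" by (rule u_periodic_of_cf_state_eq[OF ij(1,2) e])
  then have "period \<le> j - i" using period_minimal[of "j - i"] ij by simp
  then show False using ij by simp
qed

lemma u_period: "u period = 2 * u 0 - omega_trace"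
proof -
  have "-1 < of_int (P period) + \<omega>'" "of_int (P period) + \<omega>' < 0"
    using P_plus_omega_conj_bounds[OF period_ge_1] Q_period by auto
  then have "of_int (P period) \<le> \<omega> - of_int omega_trace" "\<omega> - of_int omega_trace < of_int (P period) + 1"
    unfolding omega_conj_eq by auto
  then have "\<lfloor>\<omega> - of_int omega_trace\<rfloor> = P period" by (intro floor_unique) auto
  then have f: "P period = \<lfloor>\<omega>\<rfloor> - omega_trace" by simp
  have "u period = \<lfloor>of_int (P period) + \<omega>\<rfloor>" unfolding u_def \<theta>_def Q_period by simp
  also have "\<dots> = P period + \<lfloor>\<omega>\<rfloor>" by simp
  finally have "u period = 2 * \<lfloor>\<omega>\<rfloor> - omega_trace" using f by simp
  moreover have "u 0 = \<lfloor>\<omega>\<rfloor>" unfolding u_def \<theta>_def P_0 Q_0 by simp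
  ultimately show ?thesis by simp
qed

section \<open>The ideals \<open>[Q\<^sub>n, P\<^sub>n + \<omega>]\<close> are principal\<close>

definition principal_ideal :: "real \<Rightarrow> real set" where
  "principal_ideal \<beta> = {\<beta> * x | x. x \<in> OK D}"

definition OK_unit :: "real \<Rightarrow> bool" where
  "OK_unit \<eta> \<longleftrightarrow> \<eta> \<in> OK D \<and> 1 / \<eta> \<in> OK D \<and> \<eta> \<noteq> 0"

lemma generates_iff: "generates D \<beta> I \<longleftrightarrow> \<beta> \<in> OK D \<and> I = principal_ideal \<beta>"
  by (simp add: generates_def principal_ideal_def)

lemma principal_ideal_mult: "principal_ideal (g * \<beta>) = (\<lambda>z. g * z) ` principal_ideal \<beta>"
  unfolding principal_ideal_def by (auto simp: mult.assoc)

lemma principal_ideal_mult_unit: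
  assumes "OK_unit \<eta>"
  shows "principal_ideal (\<beta> * \<eta>) = principal_ideal \<beta>"
proof -
  have \<eta>: "\<eta> \<in> OK D" "1 / \<eta> \<in> OK D" "\<eta> \<noteq> 0" using assms unfolding OK_unit_def by auto
  have "\<beta> * \<eta> * x \<in> principal_ideal \<beta>" if "x \<in> OK D" for x
    using OK_mult[OF \<eta>(1) that] unfolding principal_ideal_def by (auto simp: mult.assoc)
  moreover have "\<beta> * x \<in> principal_ideal (\<beta> * \<eta>)" if "x \<in> OK D" for x
  proof -
    have "\<beta> * x = \<beta> * \<eta> * (1 / \<eta> * x)" using \<eta>(3) by simp
    then show ?thesis using OK_mult[OF \<eta>(2) that] unfolding principal_ideal_def by blast
  qed
  ultimately show ?thesis unfolding principal_ideal_def by blast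
qed

lemma OK_unit_inverse: "OK_unit \<eta> \<Longrightarrow> OK_unit (1 / \<eta>)"
  unfolding OK_unit_def by simp

lemma OK_unit_power: "OK_unit \<eta> \<Longrightarrow> OK_unit (\<eta> ^ m)"
  unfolding OK_unit_def using OK_pow by (simp add: power_one_over[symmetric])

lemma OK_unit_uminus_1: "OK_unit (- 1)"
  unfolding OK_unit_def using OK_int[of "- 1"] by simp

lemma plus_omega_step_mult:
  fixes r m a r' m' :: int
  assumes m: "m \<noteq> 0" and mm': "m * m' = - norm_plus_omega r'" and r': "r' = a * m - r - omega_trace"
  shows "(of_int r' + \<omega>) / of_int m * (of_int r + \<omega>) = of_int m' + of_int a * (of_int r' + \<omega>)"
proof -
  have "(of_int r :: real) = of_int a * of_int m - of_int r' - of_int omega_trace" using r' by simp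
  then have "of_int r + \<omega> = of_int a * of_int m - (of_int r' + \<omega>')"
    unfolding omega_conj_eq by linarith
  then have "(of_int r' + \<omega>) * (of_int r + \<omega>) = (of_int r' + \<omega>) * (of_int a * of_int m - (of_int r' + \<omega>'))"
    by (simp only:)
  also have "\<dots> = of_int a * of_int m * (of_int r' + \<omega>) + of_int m * of_int m'"
    using norm_plus_omega_eq[of r'] mm' by (simp add: algebra_simps flip: of_int_mult)
  finally show ?thesis using m by (simp add: field_simps)
qed

lemma lattice_step:
  fixes r m a r' m' :: int
  assumes m: "m \<noteq> 0" and mm': "m * m' = - norm_plus_omega r'" and r': "r' = a * m - r - omega_trace"
  shows "lattice m' r' = (\<lambda>z. ((of_int r' + \<omega>) / of_int m) * z) ` lattice m r"
proof -
  define g where "g = (of_int r' + \<omega>) / of_int m"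
  have gm: "g * of_int m = of_int r' + \<omega>" unfolding g_def using m by simp
  have gr: "g * (of_int r + \<omega>) = of_int m' + of_int a * (of_int r' + \<omega>)"
    unfolding g_def by (rule plus_omega_step_mult[OF assms])
  have down: "of_int (k * m') + of_int l * (of_int r' + \<omega>) = g * (of_int ((l - k * a) * m) + of_int k * (of_int r + \<omega>))"
    for k l
  proof -
    have "g * (of_int ((l - k * a) * m) + of_int k * (of_int r + \<omega>))
        = of_int (l - k * a) * (g * of_int m) + of_int k * (g * (of_int r + \<omega>))"
      by (simp add: algebra_simps)
    also have "\<dots> = of_int (k * m') + of_int l * (of_int r' + \<omega>)"
      unfolding gm gr by (simp add: algebra_simps)
    finally show ?thesis by simp
  qed
  have up: "g * (of_int (i * m) + of_int j * (of_int r + \<omega>)) = of_int (j * m') + of_int (i + j * a) * (of_int r' + \<omega>)"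
    for i j
  proof -
    have "g * (of_int (i * m) + of_int j * (of_int r + \<omega>)) = of_int i * (g * of_int m) + of_int j * (g * (of_int r + \<omega>))"
      by (simp add: algebra_simps)
    also have "\<dots> = of_int (j * m') + of_int (i + j * a) * (of_int r' + \<omega>)"
      unfolding gm gr by (simp add: algebra_simps)
    finally show ?thesis .
  qed
  show ?thesis
    unfolding g_def[symmetric]
  proof (intro set_eqI iffI)
    fix x assume "x \<in> lattice m' r'"
    then obtain k l where "x = of_int (k * m') + of_int l * (of_int r' + \<omega>)" by (rule lattice_E)
    then show "x \<in> (\<lambda>z. g * z) ` lattice m r" unfolding down using lattice_I by blast
  next
    fix x assume "x \<in> (\<lambda>z. g * z) ` lattice m r"
    then obtain z where "z \<in> lattice m r" "x = g * z" by blast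
    then obtain i j where "x = g * (of_int (i * m) + of_int j * (of_int r + \<omega>))" by (metis lattice_E)
    then show "x \<in> lattice m' r'" unfolding up by (simp only: lattice_I)
  qed
qed

primrec \<Theta> :: "nat \<Rightarrow> real" where
  "\<Theta> 0 = 1" | "\<Theta> (Suc n) = \<Theta> n * \<theta> (Suc n)"

primrec \<Theta>' :: "nat \<Rightarrow> real" where
  "\<Theta>' 0 = 1" | "\<Theta>' (Suc n) = \<Theta>' n * \<theta>' (Suc n)"

definition cf_ideal :: "nat \<Rightarrow> real set" where "cf_ideal n = lattice (Q n) (P n)"
definition generator :: "nat \<Rightarrow> real" where "generator n = of_int (Q n) * \<Theta> n"

lemma cf_ideal_0: "cf_ideal 0 = OK D"
  unfolding cf_ideal_def Q_0 by (rule lattice_1)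

lemma cf_ideal_eq_principal: "cf_ideal n = principal_ideal (generator n)"
proof (induction n)
  case 0
  show ?case unfolding cf_ideal_0 generator_def principal_ideal_def Q_0 by simp
next
  case (Suc n)
  define g where "g = (of_int (P (Suc n)) + \<omega>) / of_int (Q n)"
  have "g * generator n = generator (Suc n)"
    unfolding g_def generator_def \<Theta>.simps \<theta>_def using Q_nonzero[of n] Q_nonzero[of "Suc n"]
    by (simp add: field_simps)
  moreover have "cf_ideal (Suc n) = (\<lambda>z. g * z) ` cf_ideal n"
    unfolding cf_ideal_def g_def by (rule lattice_step[OF Q_nonzero Q_mult_Q_Suc P_Suc])
  ultimately show ?case unfolding Suc principal_ideal_mult[symmetric] by simp
qed

lemma theta_K: "\<theta> n \<in> field_K" "conjugate (\<theta> n) = \<theta>' n"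
  using K_divide[OF K_add(1)[OF K_int K_omega] K_int, of "Q n"] K_add(2)[OF K_int K_omega, of "P n"] Q_nonzero[of n]
  unfolding \<theta>_def \<theta>'_def by simp_all

lemma Theta_K: "\<Theta> n \<in> field_K" "conjugate (\<Theta> n) = \<Theta>' n"
  by (induction n) (simp_all add: K_mult theta_K)

lemma Theta_pos: "\<Theta> n > 0"
  by (induction n) (auto simp: theta_pos)

lemma Theta_ge_1: "\<Theta> n \<ge> 1"
proof (induction n)
  case (Suc n)
  have "1 * 1 \<le> \<Theta> n * \<theta> (Suc n)"
    using Suc theta_gt_1_theta'_neg[of "Suc n"] by (intro mult_mono) auto
  then show ?case by simp
qed simp

lemma Theta'_sign: "(-1) ^ n * \<Theta>' n > 0"
proof (induction n)
  case (Suc n)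
  have "- \<theta>' (Suc n) > 0" using theta_gt_1_theta'_neg[of "Suc n"] by simp
  with Suc have "((-1) ^ n * \<Theta>' n) * (- \<theta>' (Suc n)) > 0" by (rule mult_pos_pos)
  then show ?case by simp
qed simp

lemma Theta'_nonzero: "\<Theta>' n \<noteq> 0"
  using Theta'_sign[of n] by auto

lemma generator_OK: "generator n \<in> OK D"
  using lattice_OK cf_ideal_eq_principal[of n] OK_1 unfolding cf_ideal_def principal_ideal_def by force

lemma generator_generates: "generates D (generator n) (cf_ideal n)"
  unfolding generates_iff using generator_OK cf_ideal_eq_principal by simp

lemma generator_norm: "generator n * conjugate (generator n) = of_int (Q n) ^ 2 * (\<Theta> n * \<Theta>' n)"
  using K_mult(2)[OF K_int Theta_K(1), of "Q n" n] Theta_K(2)[of n]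
  unfolding generator_def by (simp add: power2_eq_square algebra_simps)

lemma cf_ideal_nonzero_ideal: "nonzero_ideal D (cf_ideal n)"
  unfolding cf_ideal_def using lattice_nonzero_ideal Q_pos Q_nonzero_dvd by simp

lemma cf_ideal_primitive: "primitive D (cf_ideal n)"
  unfolding cf_ideal_def using lattice_primitive Q_pos by simp

lemma cf_ideal_norm: "ideal_norm D (cf_ideal n) = nat (Q n)"
  unfolding cf_ideal_def using ideal_norm_lattice Q_pos by simp

lemma Theta_mult_OK: "y \<in> OK D \<Longrightarrow> \<exists>i j. \<Theta> n * y = of_int i + of_int j * \<theta> n"
proof -
  assume y: "y \<in> OK D"
  have "generator n * y \<in> cf_ideal n" unfolding cf_ideal_eq_principal principal_ideal_def using y by blast
  then obtain i j where e: "generator n * y = of_int (i * Q n) + of_int j * (of_int (P n) + \<omega>)"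
    unfolding cf_ideal_def by (rule lattice_E)
  have q: "(of_int (Q n) :: real) \<noteq> 0" using Q_nonzero by simp
  have "\<Theta> n * y = (of_int (i * Q n) + of_int j * (of_int (P n) + \<omega>)) / of_int (Q n)"
    using e q unfolding generator_def by (simp add: field_simps)
  also have "\<dots> = of_int i + of_int j * \<theta> n" unfolding \<theta>_def using q by (simp add: field_simps)
  finally show ?thesis by blast
qed

lemma inverse_Theta_OK: "1 / \<Theta> n \<in> OK D"
proof -
  have "of_int (1 * Q n) + of_int 0 * (of_int (P n) + \<omega>) \<in> cf_ideal n"
    unfolding cf_ideal_def by (rule lattice_I)
  then obtain y where y: "y \<in> OK D" "of_int (Q n) = generator n * y"
    unfolding cf_ideal_eq_principal principal_ideal_def by auto
  have "y = 1 / \<Theta> n" using y(2) Q_nonzero[of n] Theta_pos[of n] unfolding generator_def by (simp add: field_simps)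
  then show ?thesis using y(1) by simp
qed

lemma cf_ideal_period: "cf_ideal period = OK D"
  unfolding cf_ideal_def Q_period by (rule lattice_1)

definition \<epsilon> :: real where "\<epsilon> = \<Theta> period"

lemma epsilon_gt_1: "\<epsilon> > 1"
proof -
  obtain m where m: "period = Suc m" using period_ge_1 by (cases period) auto
  have "1 * 1 < \<Theta> m * \<theta> (Suc m)"
    using Theta_ge_1[of m] theta_gt_1_theta'_neg[of "Suc m"] by (intro mult_le_less_imp_less) auto
  then show ?thesis unfolding \<epsilon>_def m by simp
qed

lemma OK_unit_epsilon: "OK_unit \<epsilon>"
  using generator_OK[of period] inverse_Theta_OK[of period] epsilon_gt_1
  unfolding OK_unit_def generator_def \<epsilon>_def Q_period by simp

lemma epsilon_K: "\<epsilon> \<in> field_K" "conjugate \<epsilon> = \<Theta>' period"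
  using Theta_K unfolding \<epsilon>_def by simp_all

lemma epsilon_norm_sign: "(-1) ^ period * (\<epsilon> * conjugate \<epsilon>) > 0"
  using Theta'_sign[of period] Theta_pos[of period] Theta_K(2)[of period] unfolding \<epsilon>_def
  by (simp add: mult.left_commute)


section \<open>Relative minima of \<open>O\<^sub>K\<close>\<close>

definition minimum :: "real \<Rightarrow> bool" where
  "minimum \<mu> \<longleftrightarrow> \<mu> \<in> OK D \<and> \<mu> \<noteq> 0 \<and>
     (\<forall>\<xi>\<in>OK D. \<xi> \<noteq> 0 \<longrightarrow> \<not> (\<bar>\<xi>\<bar> < \<bar>\<mu>\<bar> \<and> \<bar>conjugate \<xi>\<bar> < \<bar>conjugate \<mu>\<bar>))"

lemma minimum_mult_unit:
  assumes u: "OK_unit \<eta>" and m: "minimum \<mu>"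
  shows "minimum (\<eta> * \<mu>)"
  unfolding minimum_def
proof (intro conjI ballI impI)
  have e: "\<eta> \<in> OK D" "1 / \<eta> \<in> OK D" "\<eta> \<noteq> 0" using u unfolding OK_unit_def by auto
  have mu: "\<mu> \<in> OK D" "\<mu> \<noteq> 0" using m unfolding minimum_def by auto
  show "\<eta> * \<mu> \<in> OK D" "\<eta> * \<mu> \<noteq> 0" using OK_mult e mu by simp_all
  have eK: "\<eta> \<in> field_K" "\<mu> \<in> field_K" using e mu OK_K by auto
  have ce: "conjugate \<eta> \<noteq> 0" using conjugate_nonzero eK e by simp
  fix \<xi> assume xi: "\<xi> \<in> OK D" "\<xi> \<noteq> 0"
  show "\<not> (\<bar>\<xi>\<bar> < \<bar>\<eta> * \<mu>\<bar> \<and> \<bar>conjugate \<xi>\<bar> < \<bar>conjugate (\<eta> * \<mu>)\<bar>)"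
  proof
    assume small: "\<bar>\<xi>\<bar> < \<bar>\<eta> * \<mu>\<bar> \<and> \<bar>conjugate \<xi>\<bar> < \<bar>conjugate (\<eta> * \<mu>)\<bar>"
    define z where "z = \<xi> / \<eta>"
    have "z \<in> OK D" using OK_mult[OF xi(1) e(2)] by (simp add: z_def)
    moreover have "z \<noteq> 0" unfolding z_def using xi e by simp
    moreover have "\<bar>z\<bar> < \<bar>\<mu>\<bar>"
      using small e(3) by (simp add: z_def abs_mult divide_less_eq mult.commute)
    moreover have "\<bar>conjugate z\<bar> < \<bar>conjugate \<mu>\<bar>"
      using small ce K_divide(2)[OF OK_K[OF xi(1)] eK(1) e(3)] K_mult(2)[OF eK]
      by (simp add: z_def abs_mult divide_less_eq mult.commute)
    ultimately show False using m unfolding minimum_def by blast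
  qed
qed

lemma conjugate_int_comb_theta: "conjugate (of_int i + of_int j * \<theta> n) = of_int i + of_int j * \<theta>' n"
  using K_add(2)[OF K_int K_mult(1)[OF K_int theta_K(1)]] K_mult(2)[OF K_int theta_K(1)] theta_K(2) by simp

lemma no_minimum_between_Theta:
  assumes m: "minimum \<mu>" and lo: "1 / \<Theta> (Suc n) < \<mu>" and hi: "\<mu> < 1 / \<Theta> n"
  shows False
proof -
  have mu: "\<mu> \<in> OK D" using m unfolding minimum_def by simp
  obtain i j where ij: "\<Theta> n * \<mu> = of_int i + of_int j * \<theta> n" using Theta_mult_OK[OF mu] by blast
  have conj_ij: "\<Theta>' n * conjugate \<mu> = of_int i + of_int j * \<theta>' n"
    using K_mult(2)[OF Theta_K(1) OK_K[OF mu], of n] Theta_K(2)[of n]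
    unfolding ij conjugate_int_comb_theta by simp
  have Xp: "\<Theta> n > 0" "\<Theta> (Suc n) > 0" by (rule Theta_pos)+
  have "\<theta> n - of_int (u n) = \<Theta> n * (1 / \<Theta> (Suc n))"
    using theta_minus_u[of n] Xp theta_pos[of "Suc n"] by (simp add: field_simps)
  also have "\<dots> < \<Theta> n * \<mu>" by (rule mult_strict_left_mono[OF lo Xp(1)])
  finally have lo': "\<theta> n - of_int (u n) < of_int i + of_int j * \<theta> n" unfolding ij .
  have hi': "of_int i + of_int j * \<theta> n < 1" unfolding ij[symmetric] using hi Xp by (simp add: less_divide_eq mult.commute)
  have "\<bar>\<theta>' n - of_int (u n)\<bar> < \<bar>\<Theta>' n * conjugate \<mu>\<bar>"
    unfolding conj_ij using theta_minus_u_pos[of n] theta_gt_1_theta'_neg[of n] u_ge_1[of n] lo' hi'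
    by (intro int_comb_conj_large) auto
  also have "\<theta>' n - of_int (u n) = 1 / \<theta>' (Suc n)" using theta'_step[of n] by (metis inverse_eq_divide inverse_inverse_eq)
  also have "\<bar>1 / \<theta>' (Suc n)\<bar> = \<bar>\<Theta>' n\<bar> / \<bar>\<Theta>' (Suc n)\<bar>"
    using Theta'_nonzero[of n] by (simp add: abs_mult abs_divide)
  finally have "\<bar>\<Theta>' n\<bar> * \<bar>1 / \<Theta>' (Suc n)\<bar> < \<bar>\<Theta>' n\<bar> * \<bar>conjugate \<mu>\<bar>"
    by (simp add: abs_mult)
  then have "\<bar>1 / \<Theta>' (Suc n)\<bar> < \<bar>conjugate \<mu>\<bar>"
    using Theta'_nonzero[of n] by (metis mult_less_cancel_left_pos zero_less_abs_iff)
  moreover have "\<bar>1 / \<Theta> (Suc n)\<bar> < \<bar>\<mu>\<bar>" using lo Xp by simp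
  moreover have "conjugate (1 / \<Theta> (Suc n)) = 1 / \<Theta>' (Suc n)"
    using K_inverse(2)[OF Theta_K(1), of "Suc n"] Theta_K(2)[of "Suc n"] Xp(2)
    by (simp del: \<Theta>.simps \<Theta>'.simps)
  moreover have "1 / \<Theta> (Suc n) \<noteq> 0" using Xp(2) by (simp del: \<Theta>.simps)
  ultimately show False
    using m inverse_Theta_OK[of "Suc n"] unfolding minimum_def by metis
qed

lemma minimum_eq_inverse_Theta:
  assumes "minimum t" "t \<le> 1"
  shows "1 / \<Theta> k \<le> t \<Longrightarrow> \<exists>n\<le>k. t = 1 / \<Theta> n"
proof (induction k)
  case (Suc k)
  consider "1 / \<Theta> k \<le> t" | "t = 1 / \<Theta> (Suc k)" | "1 / \<Theta> (Suc k) < t" "t < 1 / \<Theta> k"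
    using Suc.prems by fastforce
  then show ?case
    by cases (use Suc.IH le_SucI no_minimum_between_Theta[OF assms(1)] in blast)+
qed (use assms(2) in simp)

lemma epsilon_power_int:
  shows "OK_unit (\<epsilon> powi k)" "\<epsilon> powi k \<in> field_K"
    and "\<epsilon> powi k * conjugate (\<epsilon> powi k) = (\<epsilon> * conjugate \<epsilon>) powi k"
proof -
  have e0: "\<epsilon> \<noteq> 0" using epsilon_gt_1 by simp
  note eK = epsilon_K(1)
  have "OK_unit (\<epsilon> powi k) \<and> \<epsilon> powi k \<in> field_K \<and> conjugate (\<epsilon> powi k) = conjugate \<epsilon> powi k"
  proof (cases "k \<ge> 0")
    case True
    then show ?thesis
      using OK_unit_power[OF OK_unit_epsilon] K_pow[OF eK] by (simp add: power_int_def)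
  next
    case False
    have "conjugate ((1 / \<epsilon>) ^ nat (- k)) = (1 / conjugate \<epsilon>) ^ nat (- k)"
      using K_pow(2)[OF K_inverse(1)[OF eK e0]] K_inverse(2)[OF eK e0] by simp
    then show ?thesis
      using False OK_unit_power[OF OK_unit_inverse[OF OK_unit_epsilon]] K_pow(1)[OF K_inverse(1)[OF eK e0]]
      by (simp add: power_int_def inverse_eq_divide)
  qed
  then show "OK_unit (\<epsilon> powi k)" "\<epsilon> powi k \<in> field_K"
    and "\<epsilon> powi k * conjugate (\<epsilon> powi k) = (\<epsilon> * conjugate \<epsilon>) powi k"
    by (simp_all add: power_int_mult_distrib)
qed

lemma minimum_normalize:
  assumes m: "minimum \<mu>" and \<mu>: "\<mu> > 0"
  obtains k n where "n \<le> period" "\<epsilon> powi k * \<mu> = 1 / \<Theta> n"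
proof -
  obtain k where k: "1 / \<epsilon> \<le> \<epsilon> powi k * \<mu>" "\<epsilon> powi k * \<mu> \<le> 1"
    using exists_power_int_scale[OF epsilon_gt_1 \<mu>] by blast
  have "minimum (\<epsilon> powi k * \<mu>)" by (rule minimum_mult_unit[OF epsilon_power_int(1) m])
  then show ?thesis
    using minimum_eq_inverse_Theta[OF _ k(2), of period] k(1) that unfolding \<epsilon>_def by blast
qed

section \<open>Lagrange's theorem for primitive principal ideals\<close>

text \<open>A nonzero point of \<open>[q, r + \<omega>]\<close> in the box \<open>|\<xi>|, |\<xi>'| < q\<close> would force \<open>\<surd>\<Delta> < 2q\<close>.\<close>
lemma lattice_no_small_point:
  assumes q: "q > 0" "of_int q < sqrt_disc / 2" and xi: "\<xi> \<in> lattice q r" "\<xi> \<noteq> 0"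
  shows "\<not> (\<bar>\<xi>\<bar> < of_int q \<and> \<bar>conjugate \<xi>\<bar> < of_int q)"
proof
  assume h: "\<bar>\<xi>\<bar> < of_int q \<and> \<bar>conjugate \<xi>\<bar> < of_int q"
  obtain i j where x: "\<xi> = of_int (i * q) + of_int j * (of_int r + \<omega>)" using xi(1) by (rule lattice_E)
  have x2: "\<xi> = of_int (i * q + j * r) + of_int j * \<omega>" unfolding x by (simp add: algebra_simps)
  have "\<xi> - conjugate \<xi> = of_int j * sqrt_disc"
    unfolding conjugate_OK x2 omega_minus_conj[symmetric] by (simp add: algebra_simps)
  then have "\<bar>of_int j * sqrt_disc\<bar> < 2 * of_int q"
    using h abs_triangle_ineq4[of \<xi> "conjugate \<xi>"] by linarith
  then have "\<bar>of_int j\<bar> * sqrt_disc < 2 * of_int q"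
    using sqrt_disc_pos by (simp add: abs_mult)
  then have "\<bar>of_int j\<bar> * sqrt_disc < 1 * sqrt_disc" using q(2) by simp
  then have j0: "j = 0" using sqrt_disc_pos by (simp only: mult_less_cancel_right) simp
  then have "\<bar>of_int i\<bar> * of_int q < 1 * (of_int q :: real)" using h x q(1) by (simp add: abs_mult)
  then have "i = 0" using q by (simp only: mult_less_cancel_right) simp
  then show False using xi(2) x j0 by simp
qed

lemma lattice_scaled_eq:
  assumes q: "q > 0" and q': "q' > 0"
    and e: "lattice q r = (\<lambda>z. (of_int q / of_int q') * z) ` lattice q' r'"
  shows "q = q'"
proof -
  define c where "c = (of_int q / of_int q' :: real)"
  have cR: "c \<in> \<rat>" unfolding c_def by simp
  have "of_int (0 * q) + of_int 1 * (of_int r + \<omega>) \<in> lattice q r" by (rule lattice_I)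
  then obtain z where "z \<in> lattice q' r'" "of_int r + \<omega> = c * z" using e unfolding c_def by auto
  then obtain i j where "of_int r + \<omega> = c * (of_int (i * q') + of_int j * (of_int r' + \<omega>))"
    by (metis lattice_E)
  then have "of_int r + 1 * \<omega> = c * of_int (i * q' + j * r') + (c * of_int j) * \<omega>" by (simp add: algebra_simps)
  then have "1 = c * of_int j"
    using rat_coords_unique[OF omega_irrational, of "of_int r" 1 "c * of_int (i * q' + j * r')" "c * of_int j"] cR
    by simp
  then have "of_int q' = of_int q * (of_int j :: real)" unfolding c_def using q' by (simp add: field_simps)
  then have j: "q' = q * j" by (metis of_int_eq_iff of_int_mult)
  have "c * (of_int (0 * q') + of_int 1 * (of_int r' + \<omega>)) \<in> lattice q r"
    unfolding e c_def using lattice_I by blast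
  then obtain i' j' where "c * (of_int r' + \<omega>) = of_int (i' * q) + of_int j' * (of_int r + \<omega>)"
    by (auto elim: lattice_E)
  then have "c * of_int r' + c * \<omega> = of_int (i' * q + j' * r) + of_int j' * \<omega>" by (simp add: algebra_simps)
  then have "c = of_int j'"
    using rat_coords_unique[OF omega_irrational, of "c * of_int r'" c "of_int (i' * q + j' * r)" "of_int j'"] cR
    by simp
  then have "of_int q = of_int q' * (of_int j' :: real)" unfolding c_def using q' by (simp add: field_simps)
  then have "q = q' * j'" by (metis of_int_eq_iff of_int_mult)
  then have "j * j' = 1" using j q by (simp add: algebra_simps)
  moreover have "j > 0" using j q q' by (simp add: zero_less_mult_iff)
  ultimately show ?thesis using j zmult_eq_1_iff by auto
qed

lemma small_lattice_minimum:
  assumes q: "q > 0" "of_int q < sqrt_disc / 2"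
    and b: "b > 0" "lattice q r = principal_ideal b"
    and \<mu>: "\<mu> \<in> OK D" "of_int q = b * \<mu>"
  shows "minimum \<mu>"
  unfolding minimum_def
proof (intro conjI ballI impI)
  have "0 < b * \<mu>" using \<mu>(2) q(1) by simp
  then have \<mu>_pos: "\<mu> > 0" using b(1) by (simp add: zero_less_mult_iff)
  show "\<mu> \<in> OK D" "\<mu> \<noteq> 0" using \<mu>(1) \<mu>_pos by simp_all
  have "b * 1 \<in> lattice q r" unfolding b(2) principal_ideal_def using OK_1 by blast
  then have bK: "b \<in> field_K" and \<mu>K: "\<mu> \<in> field_K" using lattice_OK OK_K \<mu>(1) by auto
  have "conjugate b * conjugate \<mu> = of_int q" by (metis K_mult(2)[OF bK \<mu>K] \<mu>(2) conjugate_int)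
  then have cb: "\<bar>conjugate b\<bar> * \<bar>conjugate \<mu>\<bar> = of_int q" using q(1) by (simp flip: abs_mult)
  have cb0: "\<bar>conjugate b\<bar> > 0" using conjugate_nonzero[OF bK] b(1) by simp
  fix \<xi> assume \<xi>: "\<xi> \<in> OK D" "\<xi> \<noteq> 0"
  show "\<not> (\<bar>\<xi>\<bar> < \<bar>\<mu>\<bar> \<and> \<bar>conjugate \<xi>\<bar> < \<bar>conjugate \<mu>\<bar>)"
  proof
    assume small: "\<bar>\<xi>\<bar> < \<bar>\<mu>\<bar> \<and> \<bar>conjugate \<xi>\<bar> < \<bar>conjugate \<mu>\<bar>"
    have "b * \<xi> \<in> lattice q r" "b * \<xi> \<noteq> 0" using b \<xi> unfolding principal_ideal_def by auto
    moreover have "\<bar>b * \<xi>\<bar> < of_int q"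
      using small b(1) \<mu>_pos unfolding \<mu>(2) by (simp add: abs_mult)
    moreover have "\<bar>conjugate b\<bar> * \<bar>conjugate \<xi>\<bar> < \<bar>conjugate b\<bar> * \<bar>conjugate \<mu>\<bar>"
      using small cb0 by simp
    then have "\<bar>conjugate (b * \<xi>)\<bar> < of_int q"
      unfolding K_mult(2)[OF bK OK_K[OF \<xi>(1)]] cb by (simp add: abs_mult)
    ultimately show False using lattice_no_small_point[OF q] by blast
  qed
qed

lemma principal_ideal_positive_generator:
  assumes "generates D \<beta> I" "\<beta> \<noteq> 0"
  obtains b where "b > 0" "generates D b I" "b * conjugate b = \<beta> * conjugate \<beta>"
proof (cases "\<beta> > 0")
  case False
  have "generates D (\<beta> * (- 1)) I"
    using assms(1) principal_ideal_mult_unit[OF OK_unit_uminus_1] OK_uminus unfolding generates_iff by simp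
  moreover have "(- \<beta>) * conjugate (- \<beta>) = \<beta> * conjugate \<beta>"
    using K_uminus(2)[OF OK_K] assms(1) unfolding generates_iff by simp
  ultimately show ?thesis using that[of "- \<beta>"] False assms(2) by simp
qed (use assms that in blast)

lemma principal_ideal_scaled_Theta:
  assumes q: "q > 0" and eq: "lattice q r = principal_ideal (of_int q * \<epsilon> powi k * \<Theta> n)"
  shows "lattice q r = cf_ideal n"
proof -
  have "principal_ideal (of_int q * \<epsilon> powi k * \<Theta> n) = principal_ideal ((of_int q / of_int (Q n)) * generator n)"
    using principal_ideal_mult_unit[OF epsilon_power_int(1), of "of_int q * \<Theta> n" k] Q_nonzero[of n]
    by (simp add: generator_def ac_simps)
  then have "lattice q r = (\<lambda>z. (of_int q / of_int (Q n)) * z) ` cf_ideal n"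
    unfolding eq cf_ideal_eq_principal principal_ideal_mult .
  moreover from this have "q = Q n" by (intro lattice_scaled_eq[OF q Q_pos]) (simp add: cf_ideal_def)
  ultimately show ?thesis using Q_nonzero[of n] by simp
qed

lemma scaled_Theta_norm_sign:
  assumes "even period" "q \<noteq> 0"
  shows "(of_int q * \<epsilon> powi k * \<Theta> n) * conjugate (of_int q * \<epsilon> powi k * \<Theta> n) < 0 \<longleftrightarrow> odd n"
proof -
  define c where "c = of_int q ^ 2 * (\<epsilon> powi k * conjugate (\<epsilon> powi k))"
  have eq: "(of_int q * \<epsilon> powi k * \<Theta> n) * conjugate (of_int q * \<epsilon> powi k * \<Theta> n) = c * (\<Theta> n * \<Theta>' n)"
    using K_mult(2)[OF K_mult(1)[OF K_int epsilon_power_int(2)] Theta_K(1)]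
      K_mult(2)[OF K_int epsilon_power_int(2)] Theta_K(2)
    by (simp add: c_def power2_eq_square ac_simps)
  have "c > 0"
    using epsilon_norm_sign assms unfolding c_def epsilon_power_int(3) by simp
  then have "c * T < 0 \<longleftrightarrow> T < 0" for T by (simp add: mult_less_0_iff)
  moreover have "\<Theta> n * \<Theta>' n < 0 \<longleftrightarrow> odd n"
    using Theta'_sign[of n] Theta_pos[of n] by (cases "even n") (auto simp: mult_less_0_iff)
  ultimately show ?thesis unfolding eq by simp
qed

lemma small_principal_is_cf_ideal:
  assumes q: "q > 0" "of_int q < sqrt_disc / 2" and gen: "generates D \<beta> (lattice q r)"
  obtains n where "1 \<le> n" "n \<le> period" "lattice q r = cf_ideal n"
    and "even period \<Longrightarrow> \<beta> * conjugate \<beta> < 0 \<longleftrightarrow> odd n"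
proof -
  have q_mem: "of_int q \<in> lattice q r" using lattice_I[of 1 q 0 r] by simp
  then have "\<beta> \<noteq> 0" using gen q(1) unfolding generates_iff principal_ideal_def by auto
  then obtain b where b: "b > 0" "generates D b (lattice q r)" "b * conjugate b = \<beta> * conjugate \<beta>"
    using principal_ideal_positive_generator gen by blast
  then obtain \<mu> where \<mu>: "\<mu> \<in> OK D" "of_int q = b * \<mu>"
    using q_mem unfolding generates_iff principal_ideal_def by blast
  have "minimum \<mu>" using small_lattice_minimum[OF q b(1) _ \<mu>, where r = r] b(2) unfolding generates_iff by simp
  moreover have "0 < b * \<mu>" using \<mu>(2) q(1) by simp
  then have "\<mu> > 0" using b(1) by (simp add: zero_less_mult_iff)
  ultimately obtain k n where n: "n \<le> period" "\<epsilon> powi k * \<mu> = 1 / \<Theta> n" by (rule minimum_normalize)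
  have b_eq: "b = of_int q * \<epsilon> powi k * \<Theta> n"
    using \<mu>(2) n(2) Theta_pos[of n] epsilon_gt_1 by (simp add: field_simps)
  have "lattice q r = principal_ideal b" using b(2) unfolding generates_iff by simp
  then have eq: "lattice q r = cf_ideal n" unfolding b_eq by (rule principal_ideal_scaled_Theta[OF q(1)])
  have sign: "even period \<Longrightarrow> \<beta> * conjugate \<beta> < 0 \<longleftrightarrow> odd n"
    using scaled_Theta_norm_sign[of q k n] q(1) b(3) unfolding b_eq by simp
  show ?thesis
  proof (cases "n = 0")
    case True
    have "lattice q r = cf_ideal period" using eq True cf_ideal_0 cf_ideal_period by simp
    moreover have "even period \<Longrightarrow> \<beta> * conjugate \<beta> < 0 \<longleftrightarrow> odd period" using sign True by simp
    ultimately show ?thesis using that period_ge_1 by blast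
  next
    case False
    then show ?thesis using that[of n] n(1) eq sign by simp
  qed
qed

section \<open>Counting the ideals\<close>

lemma real_nat_Q: "real (nat (Q n)) = of_int (Q n)"
  using Q_pos[of n] by simp

lemma cf_ideal_in_PP: "cf_ideal n \<in> PP D sqrt_disc"
  unfolding PP_def
  using cf_ideal_nonzero_ideal cf_ideal_primitive generator_generates cf_ideal_norm real_nat_Q Q_lt_sqrt_disc by auto

lemma inj_on_cf_ideal: "inj_on cf_ideal {1..period}"
proof (rule inj_onI)
  fix i j assume i: "i \<in> {1..period}" and j: "j \<in> {1..period}" and e: "cf_ideal i = cf_ideal j"
  have Qe: "Q i = Q j" using cf_ideal_norm[of i] cf_ideal_norm[of j] e Q_pos[of i] Q_pos[of j] by simp
  then have "Q i dvd P i - P j" using e lattice_eq_iff[OF Q_nonzero] unfolding cf_ideal_def by simp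
  then have "P i = P j" using P_eq_if_Q_dvd Qe i j by simp
  then have "cf_state i = cf_state j" using Qe cf_state_eq by simp
  then show "i = j" using cf_state_distinct i j by (metis atLeastAtMost_iff linorder_neqE_nat)
qed

lemma PP_half_subset_cf_ideals: "PP D (sqrt_disc / 2) \<subseteq> cf_ideal ` {1..period}"
proof
  fix I assume "I \<in> PP D (sqrt_disc / 2)"
  then have I: "nonzero_ideal D I" "primitive D I" "\<exists>\<alpha>. generates D \<alpha> I" "real (ideal_norm D I) < sqrt_disc / 2"
    unfolding PP_def by auto
  obtain q r where qr: "q > 0" "I = lattice q r" by (rule primitive_ideal_eq_lattice[OF I(1,2)])
  have "of_int q < sqrt_disc / 2" using I(4) qr ideal_norm_lattice by simp
  then obtain n where "1 \<le> n" "n \<le> period" "I = cf_ideal n"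
    using small_principal_is_cf_ideal[OF qr(1)] I(3) qr(2) by metis
  then show "I \<in> cf_ideal ` {1..period}" by auto
qed

lemma neg_norm_iff:
  assumes "\<alpha> \<in> OK D"
  shows "neg_norm D \<alpha> \<longleftrightarrow> \<alpha> * conjugate \<alpha> < 0"
proof -
  obtain a b where ab: "\<alpha> = of_int a + of_int b * \<omega>" using assms by (rule OKE)
  have "neg_norm D \<alpha> \<longleftrightarrow> (of_int a + of_int b * \<omega>) * (of_int a + of_int b * \<omega>') < 0"
    unfolding neg_norm_def ab using int_coords_unique by (metis (no_types, lifting))
  then show ?thesis unfolding ab conjugate_OK .
qed

lemma generator_neg_norm: "odd n \<Longrightarrow> neg_norm D (generator n)"
proof -
  assume "odd n"
  then have "\<Theta> n * \<Theta>' n < 0"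
    using Theta'_sign[of n] Theta_pos[of n] by (simp add: zero_less_mult_iff mult_pos_neg)
  then have "generator n * conjugate (generator n) < 0"
    using Q_nonzero[of n] unfolding generator_norm by (simp add: mult_pos_neg)
  then show ?thesis using neg_norm_iff generator_OK by simp
qed

lemma cf_ideal_in_PN: "odd n \<Longrightarrow> cf_ideal n \<in> PN D sqrt_disc"
  using cf_ideal_in_PP[of n] generator_generates[of n] generator_neg_norm[of n]
  unfolding PP_def PN_def by (simp only: mem_Collect_eq) blast

lemma PN_half_subset_odd_cf_ideals:
  assumes "even period"
  shows "PN D (sqrt_disc / 2) \<subseteq> cf_ideal ` {i. i \<in> {1..<period} \<and> odd i}"
proof
  fix I assume "I \<in> PN D (sqrt_disc / 2)"
  then have I: "nonzero_ideal D I" "primitive D I" "\<exists>\<alpha>. generates D \<alpha> I \<and> neg_norm D \<alpha>"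
      "real (ideal_norm D I) < sqrt_disc / 2"
    unfolding PN_def by auto
  obtain q r where qr: "q > 0" "I = lattice q r" by (rule primitive_ideal_eq_lattice[OF I(1,2)])
  obtain \<beta> where g: "generates D \<beta> (lattice q r)" "neg_norm D \<beta>" using I(3) qr by blast
  have neg: "\<beta> * conjugate \<beta> < 0" using g neg_norm_iff unfolding generates_iff by blast
  have "of_int q < sqrt_disc / 2" using I(4) qr ideal_norm_lattice by simp
  then obtain n where n: "1 \<le> n" "n \<le> period" "I = cf_ideal n" "odd n"
    using small_principal_is_cf_ideal[OF qr(1) _ g(1)] assms neg qr(2) by metis
  then have "n < period" using assms by (metis le_neq_implies_less)
  then show "I \<in> cf_ideal ` {i. i \<in> {1..<period} \<and> odd i}" using n by auto
qed

text \<open>For odd period the unit \<open>\<epsilon>\<close> has norm \<open>-1\<close>, so every principal ideal has a generator of negative norm.\<close>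
lemma PN_eq_PP_if_odd_period:
  assumes "odd period"
  shows "PN D X = PP D X"
proof
  show "PN D X \<subseteq> PP D X" by (rule PN_subset_PP)
  have "\<exists>\<alpha>. generates D \<alpha> I \<and> neg_norm D \<alpha>" if g: "generates D \<beta> I" "I \<noteq> {0}" for \<beta> I
  proof -
    have \<beta>: "\<beta> \<in> OK D" "\<beta> \<noteq> 0" using g unfolding generates_iff principal_ideal_def by auto
    have c\<beta>: "conjugate \<beta> \<noteq> 0" using conjugate_nonzero[OF OK_K] \<beta> by simp
    have \<epsilon>N: "\<epsilon> * conjugate \<epsilon> < 0" using epsilon_norm_sign assms by (simp add: zero_less_mult_iff)
    have g\<epsilon>: "generates D (\<beta> * \<epsilon>) I"
      using g principal_ideal_mult_unit[OF OK_unit_epsilon] OK_mult[OF \<beta>(1)] OK_unit_epsilon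
      unfolding generates_iff OK_unit_def by simp
    have prod: "(\<beta> * \<epsilon>) * conjugate (\<beta> * \<epsilon>) = (\<beta> * conjugate \<beta>) * (\<epsilon> * conjugate \<epsilon>)"
      using K_mult(2)[OF OK_K[OF \<beta>(1)] epsilon_K(1)] by (simp add: ac_simps)
    have "\<beta> * conjugate \<beta> < 0 \<or> (\<beta> * \<epsilon>) * conjugate (\<beta> * \<epsilon>) < 0"
    proof (cases "\<beta> * conjugate \<beta> < 0")
      case False
      then have "\<beta> * conjugate \<beta> > 0" using \<beta>(2) c\<beta> by (simp add: not_less le_less)
      then have "(\<beta> * conjugate \<beta>) * (\<epsilon> * conjugate \<epsilon>) < 0" using \<epsilon>N by (rule mult_pos_neg)
      then show ?thesis unfolding prod by blast
    qed blast
    then show ?thesis using g g\<epsilon> neg_norm_iff OK_mult[OF \<beta>(1)] OK_unit_epsilon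
      unfolding generates_iff OK_unit_def by blast
  qed
  then show "PP D X \<subseteq> PN D X" unfolding PP_def PN_def nonzero_ideal_def by blast
qed

lemma sum_u_bounds:
  assumes S: "finite S" "S \<noteq> {}" "S \<subseteq> {1..period}"
    and B: "cf_ideal ` S \<subseteq> B" "finite B" and A: "A \<subseteq> cf_ideal ` S"
  shows "(\<Sum>I\<in>A. sqrt_disc / real (ideal_norm D I)) - 2 * real (card B) < real_of_int (\<Sum>i\<in>S. u i)"
    and "real_of_int (\<Sum>i\<in>S. u i) < (\<Sum>I\<in>B. sqrt_disc / real (ideal_norm D I))"
proof -
  define f where "f I = sqrt_disc / real (ideal_norm D I)" for I
  have f_nonneg: "f I \<ge> 0" for I unfolding f_def using sqrt_disc_pos by simp
  have inj: "inj_on cf_ideal S" using inj_on_cf_ideal S(3) by (rule inj_on_subset)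
  have S1: "i \<in> S \<Longrightarrow> i \<ge> 1" for i using S(3) by auto
  have sum_S: "(\<Sum>I\<in>cf_ideal ` S. f I) = (\<Sum>i\<in>S. sqrt_disc / of_int (Q i))"
    using sum.reindex[OF inj, of f] unfolding f_def by (simp add: cf_ideal_norm real_nat_Q)
  have up: "(\<Sum>i\<in>S. of_int (u i)) < (\<Sum>i\<in>S. sqrt_disc / of_int (Q i))"
    using S(1,2) u_lt_sqrt_disc_div_Q S1 by (intro sum_strict_mono) auto
  have "(\<Sum>i\<in>S. sqrt_disc / of_int (Q i)) < (\<Sum>i\<in>S. of_int (u i) + 2)"
    using S(1,2) u_gt_sqrt_disc_div_Q_minus_2 S1 by (intro sum_strict_mono) (auto simp: algebra_simps)
  then have lo: "(\<Sum>i\<in>S. sqrt_disc / of_int (Q i)) < (\<Sum>i\<in>S. of_int (u i)) + 2 * real (card S)"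
    by (simp add: sum.distrib)
  have "card S \<le> card B" using card_image[OF inj] card_mono[OF B(2) B(1)] by simp
  moreover have "(\<Sum>I\<in>A. f I) \<le> (\<Sum>I\<in>cf_ideal ` S. f I)"
    using A S(1) f_nonneg by (intro sum_mono2) auto
  moreover have "(\<Sum>I\<in>cf_ideal ` S. f I) \<le> (\<Sum>I\<in>B. f I)"
    using B f_nonneg by (intro sum_mono2) auto
  ultimately show "(\<Sum>I\<in>A. sqrt_disc / real (ideal_norm D I)) - 2 * real (card B) < real_of_int (\<Sum>i\<in>S. u i)"
    and "real_of_int (\<Sum>i\<in>S. u i) < (\<Sum>I\<in>B. sqrt_disc / real (ideal_norm D I))"
    using sum_S up lo unfolding f_def by simp_all
qed

lemma sum_cf_period_bounds:
  "(\<Sum>I\<in>PP D (sqrt_disc / 2). sqrt_disc / real (ideal_norm D I)) - 2 * real (card (PP D sqrt_disc))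
     < real_of_int (\<Sum>i\<in>{1..cf_period \<omega>}. cf \<omega> i)"
  "real_of_int (\<Sum>i\<in>{1..cf_period \<omega>}. cf \<omega> i) < (\<Sum>I\<in>PP D sqrt_disc. sqrt_disc / real (ideal_norm D I))"
  using sum_u_bounds[of "{1..period}" "PP D sqrt_disc" "PP D (sqrt_disc / 2)"] period_ge_1 cf_ideal_in_PP
    PP_finite PP_half_subset_cf_ideals
  unfolding period_def[symmetric] cf_omega_eq_u by auto

lemma MD_odd_period: "odd period \<Longrightarrow> MD D = (\<Sum>i\<in>{1..period}. u i)"
proof -
  assume "odd period"
  then have "MD D = 2 * u 0 + (\<Sum>i\<in>{1..<period}. u i) - omega_trace"
    unfolding MD_def Let_def period_def[symmetric] cf_omega_eq_u omega_trace_def by simp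
  also have "\<dots> = (\<Sum>i\<in>{1..<Suc period}. u i)" using u_period period_ge_1 by simp
  also have "{1..<Suc period} = {1..period}" by auto
  finally show ?thesis .
qed

lemma MD_even_period: "even period \<Longrightarrow> MD D = (\<Sum>i\<in>{i. i \<in> {1..<period} \<and> odd i}. u i)"
  unfolding MD_def Let_def period_def[symmetric] cf_omega_eq_u by simp

lemma MD_bounds:
  "(\<Sum>I\<in>PN D (sqrt_disc / 2). sqrt_disc / real (ideal_norm D I)) - 2 * real (card (PN D sqrt_disc))
     < real_of_int (MD D)
   \<and> real_of_int (MD D) < (\<Sum>I\<in>PN D sqrt_disc. sqrt_disc / real (ideal_norm D I))"
proof (cases "even period")
  case True
  define S where "S = {i. i \<in> {1..<period} \<and> odd i}"
  have "1 \<in> S" unfolding S_def using True period_ge_1 by (cases "period = 1") auto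
  then have S: "finite S" "S \<noteq> {}" "S \<subseteq> {1..period}" unfolding S_def by auto
  have "cf_ideal ` S \<subseteq> PN D sqrt_disc" unfolding S_def using cf_ideal_in_PN by auto
  note bounds = sum_u_bounds[OF S this PN_finite PN_half_subset_odd_cf_ideals[OF True, folded S_def]]
  show ?thesis using bounds MD_even_period[OF True, folded S_def] by simp
next
  case False
  then show ?thesis
    using sum_cf_period_bounds unfolding PN_eq_PP_if_odd_period[OF False] MD_odd_period[OF False]
      period_def cf_omega_eq_u[symmetric] by simp
qed

end

theorem corollary7:
  shows "(\<exists>C::real. \<forall>D::int. D > 1 \<longrightarrow> squarefree D \<longrightarrow>
            (\<Sum>I\<in>PP D (sqrt (real_of_int (disc D)) / 2). sqrt (real_of_int (disc D)) / real (ideal_norm D I))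
              - C * real (card (PP D (sqrt (real_of_int (disc D)))))
            < real_of_int (\<Sum>i\<in>{1..cf_period (omega D)}. cf (omega D) i)
          \<and> real_of_int (\<Sum>i\<in>{1..cf_period (omega D)}. cf (omega D) i)
            < (\<Sum>I\<in>PP D (sqrt (real_of_int (disc D))). sqrt (real_of_int (disc D)) / real (ideal_norm D I)))
       \<and> (\<exists>C::real. \<forall>D::int. D > 1 \<longrightarrow> squarefree D \<longrightarrow>
            (\<Sum>I\<in>PN D (sqrt (real_of_int (disc D)) / 2). sqrt (real_of_int (disc D)) / real (ideal_norm D I))
              - C * real (card (PN D (sqrt (real_of_int (disc D)))))
            < real_of_int (MD D)
          \<and> real_of_int (MD D)
            < (\<Sum>I\<in>PN D (sqrt (real_of_int (disc D))). sqrt (real_of_int (disc D)) / real (ideal_norm D I)))"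
proof (intro conjI exI[of _ 2] allI impI)
  fix D :: int assume "D > 1" "squarefree D"
  then interpret real_quadratic_field D by unfold_locales
  note a = sum_cf_period_bounds[unfolded sqrt_disc_def] and b = MD_bounds[unfolded sqrt_disc_def]
  show "(\<Sum>I\<in>PP D (sqrt (real_of_int (disc D)) / 2). sqrt (real_of_int (disc D)) / real (ideal_norm D I))
      - 2 * real (card (PP D (sqrt (real_of_int (disc D))))) < real_of_int (\<Sum>i\<in>{1..cf_period (omega D)}. cf (omega D) i)"
    and "real_of_int (\<Sum>i\<in>{1..cf_period (omega D)}. cf (omega D) i)
      < (\<Sum>I\<in>PP D (sqrt (real_of_int (disc D))). sqrt (real_of_int (disc D)) / real (ideal_norm D I))"
    using a by simp_all
  show "(\<Sum>I\<in>PN D (sqrt (real_of_int (disc D)) / 2). sqrt (real_of_int (disc D)) / real (ideal_norm D I))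
      - 2 * real (card (PN D (sqrt (real_of_int (disc D))))) < real_of_int (MD D)"
    and "real_of_int (MD D) < (\<Sum>I\<in>PN D (sqrt (real_of_int (disc D))). sqrt (real_of_int (disc D)) / real (ideal_norm D I))"
    using b by simp_all
qed

end
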